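(* $\mathrm{Aut}_*(H)$ is a normal subgroup of $\mathrm{Aut}_c(H)$, and $\mathrm{Aut}_c(H)$ is the internal semidirect product of $\mathrm{Aut}_*(H)$ and $\mathrm{Aut}_c^{gr}(H)$. Consequently, $\mathrm{Aut}_0(H)$ is the internal semidirect product of $\mathrm{Aut}_*(H)$ and $\mathrm{Aut}_0^{gr}(H)$.
   Context: Let $k$ be a field and $0\neq q\in k$ not a root of unity. $H=k_q[x,x^{-1},y]$ is the $k$-algebra generated by $x,x^{-1},y$ with $xx^{-1}=x^{-1}x=1$, $yx=qxy$, a Hopf algebra with $\Delta(x)=x\otimes x$, $\Delta(x^{-1})=x^{-1}\otimes x^{-1}$, $\Delta(y)=y\otimes x+1\otimes y$, $\varepsilon(x)=1$, $\varepsilon(y)=0$; $\{x^ny^m:n\in\mathbb{Z},m\in\mathbb{N}\}$ is a $k$-basis. $H_0=\mathrm{span}\{x^n\}$, $H(m)=H_0y^m$. $\mathrm{Aut}_c(H)$ is the group under composition of coalgebra automorphisms of $H$; $\mathrm{Aut}_0(H)=\{\phi\in\mathrm{Aut}_c(H):\phi(1)=1\}$; $\mathrm{Aut}_c^{gr}(H)=\{\phi\in\mathrm{Aut}_c(H):\phi(H(m))\subseteq H(m)\ \forall m\ge0\}$; $\mathrm{Aut}_0^{gr}(H)=\mathrm{Aut}_c^{gr}(H)\cap\mathrm{Aut}_0(H)$; $\mathrm{Aut}_*(H)$ is the set of $\phi\in\mathrm{Aut}_0(H)$ such that for each $n\in\mathbb{Z}$ there is $\beta_n\in k$ with $\phi(x^ny)=x^ny+\beta_n(x^{n+1}-x^n)$.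 *)

theory Defs
  imports "HOL-Algebra.Coset" "HOL-Library.FuncSet"
begin

text \<open>Model of H = k_q[x,x^-1,y]: an element is a finitely supported coefficient
function on the basis x^n y^m, indexed by (n,m) :: int \<times> nat.
Elements of H \<otimes> H are finitely supported functions on pairs of basis indices.\<close>

type_synonym 'k hel = "int \<times> nat \<Rightarrow> 'k"
type_synonym 'k htens = "(int \<times> nat) \<times> (int \<times> nat) \<Rightarrow> 'k"

definition supp :: "('a \<Rightarrow> 'k::zero) \<Rightarrow> 'a set" where
  "supp f = {b. f b \<noteq> 0}"

definition Hsp :: "'k::field hel set" where
  "Hsp = {f. finite (supp f)}"

definition bas :: "'a \<Rightarrow> 'a \<Rightarrow> 'k::field" where
  "bas b = (\<lambda>c. if c = b then 1 else 0)"

text \<open>Product of basis elements in H: (x^a y^b)(x^e y^f) = q^(b e) x^(a+e) y^(b+f),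
 from yx = qxy (and y x^-1 = q^-1 x^-1 y).\<close>
fun hmul_basis :: "'k::field \<Rightarrow> int \<times> nat \<Rightarrow> int \<times> nat \<Rightarrow> 'k \<times> (int \<times> nat)" where
  "hmul_basis q (a, b) (e, f) = (q powi (int b * e), (a + e, b + f))"

definition tmul :: "'k::field \<Rightarrow> 'k htens \<Rightarrow> 'k htens \<Rightarrow> 'k htens" where
  "tmul q s t = (\<lambda>p. \<Sum>(u, v) \<in> supp s \<times> supp t.
      s u * t v *
      (let (c1, r1) = hmul_basis q (fst u) (fst v);
           (c2, r2) = hmul_basis q (snd u) (snd v)
       in if (r1, r2) = p then c1 * c2 else 0))"

primrec tpow :: "'k::field \<Rightarrow> 'k htens \<Rightarrow> nat \<Rightarrow> 'k htens" where
  "tpow q t 0 = bas ((0, 0), (0, 0))"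
| "tpow q t (Suc m) = tmul q (tpow q t m) t"

definition Delta_y :: "'k::field htens" where
  "Delta_y = (\<lambda>p. bas ((0, 1), (1, 0)) p + bas ((0, 0), (0, 1)) p)"

text \<open>\<Delta>(x^n y^m) = \<Delta>(x)^n \<Delta>(y)^m = (x^n \<otimes> x^n) (y \<otimes> x + 1 \<otimes> y)^m, as \<Delta> is an algebra map.\<close>
fun Delta_basis :: "'k::field \<Rightarrow> int \<times> nat \<Rightarrow> 'k htens" where
  "Delta_basis q (n, m) = tmul q (bas ((n, 0), (n, 0))) (tpow q Delta_y m)"

definition Delta :: "'k::field \<Rightarrow> 'k hel \<Rightarrow> 'k htens" where
  "Delta q h = (\<lambda>p. \<Sum>b \<in> supp h. h b * Delta_basis q b p)"

definition eps :: "'k::field hel \<Rightarrow> 'k" where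
  "eps h = (\<Sum>b \<in> supp h. h b * (if snd b = 0 then 1 else 0))"

definition tmap :: "('k::field hel \<Rightarrow> 'k hel) \<Rightarrow> 'k htens \<Rightarrow> 'k htens" where
  "tmap \<phi> t = (\<lambda>p. \<Sum>u \<in> supp t. t u * \<phi> (bas (fst u)) (fst p) * \<phi> (bas (snd u)) (snd p))"

definition klinear :: "('k::field hel \<Rightarrow> 'k hel) \<Rightarrow> bool" where
  "klinear \<phi> \<longleftrightarrow> (\<forall>f\<in>Hsp. \<forall>g\<in>Hsp. \<phi> (\<lambda>b. f b + g b) = (\<lambda>b. \<phi> f b + \<phi> g b))
                 \<and> (\<forall>c. \<forall>f\<in>Hsp. \<phi> (\<lambda>b. c * f b) = (\<lambda>b. c * \<phi> f b))"

definition coalg_aut :: "'k::field \<Rightarrow> ('k hel \<Rightarrow> 'k hel) \<Rightarrow> bool" where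
  "coalg_aut q \<phi> \<longleftrightarrow> bij_betw \<phi> Hsp Hsp \<and> klinear \<phi>
      \<and> (\<forall>h\<in>Hsp. Delta q (\<phi> h) = tmap \<phi> (Delta q h))
      \<and> (\<forall>h\<in>Hsp. eps (\<phi> h) = eps h)"

definition Autc :: "'k::field \<Rightarrow> ('k hel \<Rightarrow> 'k hel) set" where
  "Autc q = {\<phi>. coalg_aut q \<phi> \<and> \<phi> \<in> extensional Hsp}"

definition AutcG :: "'k::field \<Rightarrow> ('k hel \<Rightarrow> 'k hel) monoid" where
  "AutcG q = \<lparr>carrier = Autc q, mult = (\<lambda>\<phi> \<psi>. compose Hsp \<phi> \<psi>), one = restrict id Hsp\<rparr>"

definition Aut0 :: "'k::field \<Rightarrow> ('k hel \<Rightarrow> 'k hel) set" where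
  "Aut0 q = {\<phi> \<in> Autc q. \<phi> (bas (0, 0)) = bas (0, 0)}"

definition Aut0G :: "'k::field \<Rightarrow> ('k hel \<Rightarrow> 'k hel) monoid" where
  "Aut0G q = \<lparr>carrier = Aut0 q, mult = (\<lambda>\<phi> \<psi>. compose Hsp \<phi> \<psi>), one = restrict id Hsp\<rparr>"

definition Hm :: "nat \<Rightarrow> 'k::field hel set" where
  "Hm m = {h \<in> Hsp. \<forall>b \<in> supp h. snd b = m}"

definition Autgr :: "'k::field \<Rightarrow> ('k hel \<Rightarrow> 'k hel) set" where
  "Autgr q = {\<phi> \<in> Autc q. \<forall>m. \<phi> ` Hm m \<subseteq> Hm m}"

definition Aut0gr :: "'k::field \<Rightarrow> ('k hel \<Rightarrow> 'k hel) set" where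
  "Aut0gr q = Autgr q \<inter> Aut0 q"

definition Autstar :: "'k::field \<Rightarrow> ('k hel \<Rightarrow> 'k hel) set" where
  "Autstar q = {\<phi> \<in> Aut0 q. \<forall>n::int. \<exists>\<beta>.
      \<phi> (bas (n, 1)) = (\<lambda>c. bas (n, 1) c + \<beta> * (bas (n + 1, 0) c - bas (n, 0) c))}"

end

theory Submission
  imports Defs
begin

text \<open>Coalgebra automorphisms map group-likes to group-likes and skew primitives to skew
  primitives. Since \<open>q\<close> is not a root of unity, the group-likes of \<open>H\<close> are the \<open>x^n\<close>, and the
  \<open>(x^(n+1), x^n)\<close>-skew primitives are spanned by \<open>x^n y\<close> and \<open>x^(n+1) - x^n\<close>. Hence every
  \<open>\<phi> \<in> Aut\<^sub>c(H)\<close> has the form \<open>\<phi>(x^n) = x^(n+k)\<close>, \<open>\<phi>(x^n y) = \<alpha>\<^sub>n x^(n+k) y + \<beta>\<^sub>n (x^(n+k+1) - x^(n+k))\<close>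
  with \<open>\<alpha>\<^sub>n \<noteq> 0\<close>, and \<open>Aut\<^sub>*(H)\<close> consists of those with \<open>k = 0\<close> and \<open>\<alpha> = 1\<close>. This shape is
  preserved by conjugation, and composing \<open>\<phi>\<close> with the diagonal graded automorphism
  \<open>x^n y^m \<mapsto> \<alpha>\<^sub>n \<cdots> \<alpha>\<^sub>n\<^sub>+\<^sub>m\<^sub>-\<^sub>1 x^(n+k) y^m\<close> brings it into \<open>Aut\<^sub>*(H)\<close>. A graded element of
  \<open>Aut\<^sub>*(H)\<close> fixes \<open>x^n y\<close>, and comparing the coefficients of \<open>x^a y \<otimes> x^(a+1) y^(m-1)\<close> in
  \<open>\<Delta> \<circ> \<phi> = (\<phi> \<otimes> \<phi>) \<circ> \<Delta>\<close> (a nonzero \<open>q\<close>-integer times the coefficient of \<open>x^a y^m\<close>) shows by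
  induction on \<open>m\<close> that it fixes every \<open>x^n y^m\<close>. Finally, an internal semidirect product
  \<open>N \<rtimes> K\<close> restricts to \<open>N \<rtimes> (K \<inter> H)\<close> on every subgroup \<open>H \<supseteq> N\<close>, which gives the statement
  for \<open>Aut\<^sub>0(H) \<supseteq> Aut\<^sub>*(H)\<close>.\<close>

section \<open>Finitely supported functions and linear maps\<close>

lemma supp_bas [simp]: "supp (bas b :: 'a \<Rightarrow> 'k::field) = {b}"
  by (auto simp: supp_def bas_def)

lemma bas_in_Hsp [simp]: "bas b \<in> Hsp"
  by (simp add: Hsp_def)

lemma Hsp_finite_supp: "h \<in> Hsp \<Longrightarrow> finite (supp h)"
  by (simp add: Hsp_def)

lemma bas_eq_iff [simp]: "(bas a :: 'a \<Rightarrow> 'k::field) = bas b \<longleftrightarrow> a = b"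
  unfolding bas_def fun_eq_iff by (metis zero_neq_one)

lemma Hsp_if_zero_outside: "finite S \<Longrightarrow> (\<And>b. b \<notin> S \<Longrightarrow> f b = 0) \<Longrightarrow> f \<in> Hsp"
  unfolding Hsp_def mem_Collect_eq by (rule finite_subset[of _ S]) (auto simp: supp_def)

lemma Hsp_add: "f \<in> Hsp \<Longrightarrow> g \<in> Hsp \<Longrightarrow> (\<lambda>b. f b + g b) \<in> Hsp"
  unfolding Hsp_def mem_Collect_eq
  by (rule finite_subset[of _ "supp f \<union> supp g"]) (auto simp: supp_def)

lemma Hsp_smult: "f \<in> Hsp \<Longrightarrow> (\<lambda>b. c * f b) \<in> Hsp"
  unfolding Hsp_def mem_Collect_eq by (rule finite_subset[of _ "supp f"]) (auto simp: supp_def)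

lemma Hsp_zero: "(\<lambda>b. 0) \<in> Hsp"
  by (simp add: Hsp_def supp_def)

lemma sum_mult_delta:
  fixes s :: "'a \<Rightarrow> 'k::field"
  assumes "finite S" "supp s \<subseteq> S"
  shows "(\<Sum>u\<in>S. s u * (if u = u0 then c else 0)) = s u0 * c"
proof -
  have "(\<Sum>u\<in>S. s u * (if u = u0 then c else 0)) = (\<Sum>u\<in>S. if u = u0 then s u * c else 0)"
    by (rule sum.cong) auto
  also have "\<dots> = (if u0 \<in> S then s u0 * c else 0)" using assms(1) by simp
  also have "\<dots> = s u0 * c" using assms(2) by (auto simp: supp_def)
  finally show ?thesis .
qed

lemma sum_eq_single:
  assumes "finite S" "\<And>u. u \<in> S \<Longrightarrow> u \<noteq> u0 \<Longrightarrow> f u = 0"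
  shows "(\<Sum>u\<in>S. f u) = (if u0 \<in> S then f u0 else 0)"
proof -
  have "(\<Sum>u\<in>S. f u) = (\<Sum>u\<in>S. if u = u0 then f u else 0)"
    by (rule sum.cong) (auto simp: assms(2))
  then show ?thesis using assms(1) by simp
qed

lemma fun_eq_sum_bas:
  fixes h :: "'a \<Rightarrow> 'k::field"
  assumes "finite S" "supp h \<subseteq> S"
  shows "h = (\<lambda>p. \<Sum>b\<in>S. h b * bas b p)"
proof
  fix p
  have "(\<Sum>b\<in>S. h b * bas b p) = (\<Sum>b\<in>S. h b * (if b = p then 1 else 0))"
    by (rule sum.cong) (auto simp: bas_def)
  then show "h p = (\<Sum>b\<in>S. h b * bas b p)" using sum_mult_delta[OF assms] by simp
qed

lemma klinear_add:
  "klinear \<phi> \<Longrightarrow> f \<in> Hsp \<Longrightarrow> g \<in> Hsp \<Longrightarrow> \<phi> (\<lambda>b. f b + g b) = (\<lambda>b. \<phi> f b + \<phi> g b)"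
  unfolding klinear_def by blast

lemma klinear_smult: "klinear \<phi> \<Longrightarrow> f \<in> Hsp \<Longrightarrow> \<phi> (\<lambda>b. c * f b) = (\<lambda>b. c * \<phi> f b)"
  unfolding klinear_def by blast

lemma klinear_zero: "klinear \<phi> \<Longrightarrow> \<phi> (\<lambda>b. 0) = (\<lambda>b. 0)"
  using klinear_smult[of \<phi> "bas (0::int, 0::nat)" 0] by simp

lemma klinear_sum:
  assumes "klinear \<phi>" "finite S"
  shows "\<phi> (\<lambda>p. \<Sum>b\<in>S. c b * bas b p) = (\<lambda>p. \<Sum>b\<in>S. c b * \<phi> (bas b) p)"
  using assms(2)
proof (induction S)
  case empty
  then show ?case using klinear_zero[OF assms(1)] by simp
next
  case (insert x S)
  have S: "(\<lambda>p. \<Sum>b\<in>S. c b * bas b p) \<in> Hsp"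
    using insert(1) by (rule Hsp_if_zero_outside) (auto simp: bas_def intro!: sum.neutral)
  have "\<phi> (\<lambda>p. \<Sum>b\<in>insert x S. c b * bas b p)
      = \<phi> (\<lambda>p. (\<lambda>p. c x * bas x p) p + (\<lambda>p. \<Sum>b\<in>S. c b * bas b p) p)"
    using insert by simp
  also have "\<dots> = (\<lambda>p. \<phi> (\<lambda>p. c x * bas x p) p + \<phi> (\<lambda>p. \<Sum>b\<in>S. c b * bas b p) p)"
    by (rule klinear_add[OF assms(1) Hsp_smult[OF bas_in_Hsp] S])
  also have "\<dots> = (\<lambda>p. \<Sum>b\<in>insert x S. c b * \<phi> (bas b) p)"
    using klinear_smult[OF assms(1) bas_in_Hsp] insert by simp
  finally show ?case .
qed

lemma klinear_apply_superset:
  assumes "klinear \<phi>" "finite S" "supp h \<subseteq> S"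
  shows "\<phi> h p = (\<Sum>b\<in>S. h b * \<phi> (bas b) p)"
proof -
  have "\<phi> h = \<phi> (\<lambda>p. \<Sum>b\<in>S. h b * bas b p)" using fun_eq_sum_bas[OF assms(2,3)] by simp
  then show ?thesis using klinear_sum[OF assms(1,2)] by simp
qed

lemma klinear_apply:
  "klinear \<phi> \<Longrightarrow> h \<in> Hsp \<Longrightarrow> \<phi> h p = (\<Sum>b\<in>supp h. h b * \<phi> (bas b) p)"
  by (rule klinear_apply_superset) (simp_all add: Hsp_finite_supp)

lemma klinear_combination:
  assumes lin: "klinear \<phi>" and f: "f \<in> Hsp" and g: "g \<in> Hsp" and h: "h \<in> Hsp"
  shows "\<phi> (\<lambda>c. a * f c + b * (g c - h c)) = (\<lambda>c. a * \<phi> f c + b * (\<phi> g c - \<phi> h c))"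
proof -
  have "\<phi> (\<lambda>c. a * f c + b * (g c - h c))
      = \<phi> (\<lambda>c. (\<lambda>c. a * f c) c + (\<lambda>c. (\<lambda>c. b * g c) c + (\<lambda>c. (-b) * h c) c) c)"
    by (rule arg_cong[where f=\<phi>]) (simp add: fun_eq_iff algebra_simps)
  also have "\<dots> = (\<lambda>c. \<phi> (\<lambda>c. a * f c) c + \<phi> (\<lambda>c. (\<lambda>c. b * g c) c + (\<lambda>c. (-b) * h c) c) c)"
    by (rule klinear_add[OF lin Hsp_smult[OF f] Hsp_add[OF Hsp_smult[OF g] Hsp_smult[OF h]]])
  also have "\<phi> (\<lambda>c. (\<lambda>c. b * g c) c + (\<lambda>c. (-b) * h c) c) = (\<lambda>c. \<phi> (\<lambda>c. b * g c) c + \<phi> (\<lambda>c. (-b) * h c) c)"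
    by (rule klinear_add[OF lin Hsp_smult[OF g] Hsp_smult[OF h]])
  also have "\<phi> (\<lambda>c. a * f c) = (\<lambda>c. a * \<phi> f c)" by (rule klinear_smult[OF lin f])
  also have "\<phi> (\<lambda>c. b * g c) = (\<lambda>c. b * \<phi> g c)" by (rule klinear_smult[OF lin g])
  also have "\<phi> (\<lambda>c. (-b) * h c) = (\<lambda>c. (-b) * \<phi> h c)" by (rule klinear_smult[OF lin h])
  finally show ?thesis by (simp add: algebra_simps)
qed

lemma klinear_compose:
  assumes "klinear \<phi>" "klinear \<psi>" "\<And>h. h \<in> Hsp \<Longrightarrow> \<psi> h \<in> Hsp"
  shows "klinear (compose Hsp \<phi> \<psi>)"
  unfolding klinear_def
  using assms by (simp add: compose_eq Hsp_add Hsp_smult klinear_add klinear_smult)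

lemma klinear_inv_into:
  assumes bij: "bij_betw \<phi> Hsp Hsp" and lin: "klinear \<phi>"
  shows "klinear (restrict (inv_into Hsp \<phi>) Hsp)"
proof -
  define \<psi> where "\<psi> = restrict (inv_into Hsp \<phi>) Hsp"
  have \<psi>: "\<psi> h \<in> Hsp" and \<phi>\<psi>: "\<phi> (\<psi> h) = h" if "h \<in> Hsp" for h
    using that bij by (auto simp: \<psi>_def bij_betw_def f_inv_into_f inv_into_into)
  have \<psi>\<phi>: "\<psi> (\<phi> h) = h" if "h \<in> Hsp" for h
    using that bij by (auto simp: \<psi>_def bij_betw_def inv_into_f_f)
  have "klinear \<psi>"
    unfolding klinear_def
  proof (intro conjI ballI allI)
    fix a b :: "'a hel" assume a: "a \<in> Hsp" and b: "b \<in> Hsp"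
    have "\<phi> (\<lambda>x. \<psi> a x + \<psi> b x) = (\<lambda>x. a x + b x)"
      using klinear_add[OF lin \<psi>[OF a] \<psi>[OF b]] \<phi>\<psi> a b by simp
    then show "\<psi> (\<lambda>x. a x + b x) = (\<lambda>x. \<psi> a x + \<psi> b x)"
      using \<psi>\<phi>[OF Hsp_add[OF \<psi>[OF a] \<psi>[OF b]]] by simp
  next
    fix c and a :: "'a hel" assume a: "a \<in> Hsp"
    have "\<phi> (\<lambda>x. c * \<psi> a x) = (\<lambda>x. c * a x)"
      using klinear_smult[OF lin \<psi>[OF a]] \<phi>\<psi> a by simp
    then show "\<psi> (\<lambda>x. c * a x) = (\<lambda>x. c * \<psi> a x)"
      using \<psi>\<phi>[OF Hsp_smult[where c=c, OF \<psi>[OF a]]] by simp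
  qed
  then show ?thesis by (simp add: \<psi>_def)
qed

section \<open>The coproduct on the monomial basis\<close>

text \<open>The Gaussian binomial coefficient \<open>qbinom q m i\<close>, via the recursion that comes
  from expanding \<open>(y \<otimes> x + 1 \<otimes> y)^m\<close>, where \<open>(1 \<otimes> y)(y \<otimes> x) = q (y \<otimes> x)(1 \<otimes> y)\<close>.\<close>

primrec qbinom :: "'k::field \<Rightarrow> nat \<Rightarrow> nat \<Rightarrow> 'k" where
  "qbinom q 0 i = (if i = 0 then 1 else 0)"
| "qbinom q (Suc m) i = (if 0 < i then qbinom q m (i - 1) * q ^ (Suc m - i) else 0)
                       + (if i \<le> m then qbinom q m i else 0)"

lemma qbinom_0 [simp]: "qbinom q m 0 = 1"
  by (induction m) auto

lemma qbinom_eq_0: "m < i \<Longrightarrow> qbinom q m i = 0"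
  by (induction m arbitrary: i) auto

lemma qbinom_1: "qbinom q m 1 * (q - 1) = q ^ m - 1"
proof (induction m)
  case (Suc m)
  have "qbinom q (Suc m) 1 = q ^ m + qbinom q m 1"
    by (cases m) (auto simp: qbinom_eq_0)
  then show ?case using Suc by (simp add: algebra_simps)
qed simp

lemma qbinom_1_nonzero:
  assumes "\<forall>n::nat. n > 0 \<longrightarrow> q ^ n \<noteq> 1" "0 < m"
  shows "qbinom q m 1 \<noteq> 0"
  using qbinom_1[of q m] assms by auto

lemma supp_Delta_y: "supp (Delta_y :: 'k::field htens) = {((0,1),(1,0)), ((0,0),(0,1))}"
  by (auto simp: supp_def Delta_y_def bas_def)

lemma tmul_Delta_y_term1:
  fixes s :: "'k::field htens"
  shows "s u * Delta_y ((0,1),(1,0)) *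
      (let (c1, r1) = hmul_basis q (fst u) (fst ((0::int,1::nat),(1::int,0::nat)));
           (c2, r2) = hmul_basis q (snd u) (snd ((0::int,1::nat),(1::int,0::nat)))
       in if (r1, r2) = ((a,i),(b,j)) then c1 * c2 else 0)
    = (if 0 < i then s u * (if u = ((a,i-1),(b-1,j)) then q ^ j else 0) else 0)"
  by (cases u) (auto simp: Delta_y_def bas_def Let_def split: if_splits)

lemma tmul_Delta_y_term2:
  fixes s :: "'k::field htens"
  shows "s u * Delta_y ((0,0),(0,1)) *
      (let (c1, r1) = hmul_basis q (fst u) (fst ((0::int,0::nat),(0::int,1::nat)));
           (c2, r2) = hmul_basis q (snd u) (snd ((0::int,0::nat),(0::int,1::nat)))
       in if (r1, r2) = ((a,i),(b,j)) then c1 * c2 else 0)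
    = (if 0 < j then s u * (if u = ((a,i),(b,j-1)) then 1 else 0) else 0)"
  by (cases u) (auto simp: Delta_y_def bas_def Let_def split: if_splits)

lemma tmul_Delta_y:
  fixes s :: "'k::field htens"
  assumes "finite (supp s)"
  shows "tmul q s Delta_y ((a,i),(b,j)) = (if 0 < i then s ((a,i-1),(b-1,j)) * q ^ j else 0)
                                         + (if 0 < j then s ((a,i),(b,j-1)) else 0)"
proof -
  have ne: "((0::int,1::nat),(1::int,0::nat)) \<noteq> ((0,0),(0,1))" by simp
  have "tmul q s Delta_y ((a,i),(b,j)) = (\<Sum>u\<in>supp s.
     (if 0 < i then s u * (if u = ((a,i-1),(b-1,j)) then q ^ j else 0) else 0)
   + (if 0 < j then s u * (if u = ((a,i),(b,j-1)) then 1 else 0) else 0))"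
    unfolding tmul_def sum.cartesian_product[symmetric] supp_Delta_y
    by (simp only: sum.insert[OF finite.insertI[OF finite.emptyI]] sum.empty insert_iff empty_iff
          ne simp_thms sum.insert[OF finite.emptyI] tmul_Delta_y_term1 tmul_Delta_y_term2 add_0_right)
  also have "\<dots> = (if 0 < i then s ((a,i-1),(b-1,j)) * q ^ j else 0)
                 + (if 0 < j then s ((a,i),(b,j-1)) else 0)"
    by (simp add: sum.distrib sum_mult_delta[OF assms] sum.If_cases)
  finally show ?thesis .
qed

lemma tpow_Delta_y:
  "tpow q Delta_y m ((a,i),(b,j)) = (if a = 0 \<and> b = int i \<and> i + j = m then qbinom q m i else 0)"
proof (induction m arbitrary: a i b j)
  case (Suc m)
  have "supp (tpow q Delta_y m) \<subseteq> (\<lambda>i. ((0,i),(int i, m-i))) ` {..m}"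
    by (auto simp: supp_def Suc.IH split: if_splits)
  then have "finite (supp (tpow q Delta_y m))" by (rule finite_subset) simp
  then show ?case
    unfolding tpow.simps tmul_Delta_y[OF \<open>finite _\<close>] Suc.IH by (cases i; cases j) auto
qed (auto simp: bas_def)

lemma finite_supp_tpow_Delta_y: "finite (supp (tpow q Delta_y m))"
proof (rule finite_subset)
  show "supp (tpow q Delta_y m) \<subseteq> (\<lambda>i. ((0,i),(int i, m-i))) ` {..m}"
    by (auto simp: supp_def tpow_Delta_y split: if_splits)
qed simp

lemma tmul_bas_grouplike:
  fixes t :: "'k::field htens"
  assumes "finite (supp t)"
  shows "tmul q (bas ((n,0),(n,0))) t ((a,i),(b,j)) = t ((a-n,i),(b-n,j))"
proof -
  have "tmul q (bas ((n,0),(n,0))) t ((a,i),(b,j))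
      = (\<Sum>v\<in>supp t. t v * (if v = ((a-n,i),(b-n,j)) then 1 else 0))"
    unfolding tmul_def sum.cartesian_product[symmetric] supp_bas
    by (simp only: sum.insert[OF finite.emptyI] empty_iff simp_thms sum.empty add_0_right)
      (rule sum.cong; auto simp: bas_def Let_def split: if_splits)
  also have "\<dots> = t ((a-n,i),(b-n,j))" using sum_mult_delta[OF assms subset_refl] by simp
  finally show ?thesis .
qed

lemma Delta_basis_eq:
  "Delta_basis q (n,m) ((a,i),(b,j)) = (if a = n \<and> b = n + int i \<and> i + j = m then qbinom q m i else 0)"
  by (simp add: tmul_bas_grouplike[OF finite_supp_tpow_Delta_y] tpow_Delta_y)

declare Delta_basis.simps [simp del]

lemma Delta_bas: "Delta q (bas c) = Delta_basis q c"
  unfolding Delta_def supp_bas by (simp add: bas_def)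

lemma Delta_eq:
  assumes "h \<in> Hsp"
  shows "Delta q h ((a,i),(b,j)) = (if b = a + int i then qbinom q (i+j) i * h (a, i+j) else 0)"
proof -
  have "Delta q h ((a,i),(b,j))
      = (\<Sum>c\<in>supp h. h c * (if c = (a, i+j) then (if b = a + int i then qbinom q (i+j) i else 0) else 0))"
    unfolding Delta_def
  proof (rule sum.cong[OF refl])
    fix c :: "int \<times> nat"
    show "h c * Delta_basis q c ((a,i),(b,j))
        = h c * (if c = (a, i+j) then (if b = a + int i then qbinom q (i+j) i else 0) else 0)"
      by (cases c) (auto simp: Delta_basis_eq)
  qed
  then show ?thesis using sum_mult_delta[OF Hsp_finite_supp[OF assms] subset_refl] by simp
qed

lemma finite_supp_Delta:
  assumes "h \<in> Hsp"
  shows "finite (supp (Delta q h))"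
proof (rule finite_subset)
  have fin: "finite (supp h)" using assms by (rule Hsp_finite_supp)
  let ?M = "Max (snd ` supp h)"
  show "supp (Delta q h) \<subseteq> (\<lambda>((a,m),i). ((a,i),(a + int i, m - i))) ` (supp h \<times> {..?M})"
  proof
    fix p assume p: "p \<in> supp (Delta q h)"
    obtain a i b j where pe: "p = ((a,i),(b,j))" by (metis prod.collapse)
    have "Delta q h ((a,i),(b,j)) \<noteq> 0" using p pe by (simp add: supp_def)
    then have b: "b = a + int i" and hs: "(a, i+j) \<in> supp h"
      by (auto simp: Delta_eq[OF assms] supp_def split: if_splits)
    have "i + j \<le> ?M" using hs fin by (metis Max_ge finite_imageI image_eqI snd_conv)
    then show "p \<in> (\<lambda>((a,m),i). ((a,i),(a + int i, m - i))) ` (supp h \<times> {..?M})"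
      using hs b pe by (auto intro!: image_eqI[where x="((a,i+j),i)"])
  qed
  show "finite ((\<lambda>((a,m),i). ((a,i),(a + int i, m - i))) ` (supp h \<times> {..?M}))"
    using fin by simp
qed

lemma Delta_basis_0: "Delta_basis q (n,0) = bas ((n,0),(n,0))"
  by (rule ext) (auto simp: Delta_basis_eq bas_def split: if_splits)

lemma Delta_basis_1: "Delta_basis q (n,1) = (\<lambda>p. bas ((n,1),(n+1,0)) p + bas ((n,0),(n,1)) p)"
proof
  fix p :: "(int \<times> nat) \<times> int \<times> nat"
  obtain a i b j where "p = ((a,i),(b,j))" by (metis prod.collapse)
  then show "Delta_basis q (n,1) p = bas ((n,1),(n+1,0)) p + bas ((n,0),(n,1)) p"
    by (cases i) (auto simp: Delta_basis_eq bas_def)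
qed

lemma eps_bas: "eps (bas (n,m) :: 'k::field hel) = (if m = 0 then 1 else 0)"
  unfolding eps_def supp_bas by (simp add: bas_def)

lemma eps_eq_sum_superset:
  assumes "finite S" "supp h \<subseteq> S"
  shows "eps h = (\<Sum>b\<in>S. h b * (if snd b = 0 then 1 else 0))"
  unfolding eps_def by (rule sum.mono_neutral_left[OF assms]) (auto simp: supp_def)

section \<open>Tensor squares of linear maps\<close>

lemma tmap_eq_sum_superset:
  assumes "finite A" "supp t \<subseteq> A"
  shows "tmap \<phi> t p = (\<Sum>u\<in>A. t u * \<phi> (bas (fst u)) (fst p) * \<phi> (bas (snd u)) (snd p))"
  unfolding tmap_def by (rule sum.mono_neutral_left[OF assms]) (auto simp: supp_def)

lemma tmap_bas: "tmap \<phi> (bas u) p = \<phi> (bas (fst u)) (fst p) * \<phi> (bas (snd u)) (snd p)"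
  unfolding tmap_def supp_bas by (simp add: bas_def)

lemma tmap_cong: "(\<And>b. f (bas b) = g (bas b)) \<Longrightarrow> tmap f t = tmap g t"
  unfolding tmap_def by simp

lemma tmap_restrict_id:
  assumes "finite (supp t)"
  shows "tmap (restrict id Hsp) t = t"
proof
  fix p
  have "tmap (restrict id Hsp) t p = (\<Sum>u\<in>supp t. t u * (if u = p then 1 else 0))"
    unfolding tmap_def
    by (rule sum.cong[OF refl], simp only: restrict_apply'[OF bas_in_Hsp] id_apply)
      (auto simp: bas_def prod_eq_iff)
  then show "tmap (restrict id Hsp) t p = t p" using sum_mult_delta[OF assms subset_refl] by simp
qed

lemma supp_tmap_subset:
  assumes "\<And>u. u \<in> supp t \<Longrightarrow> supp (\<psi> (bas (fst u))) \<subseteq> S1 \<and> supp (\<psi> (bas (snd u))) \<subseteq> S2"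
  shows "supp (tmap \<psi> t) \<subseteq> S1 \<times> S2"
proof
  fix v assume v: "v \<in> supp (tmap \<psi> t)"
  show "v \<in> S1 \<times> S2"
  proof (rule ccontr)
    assume "v \<notin> S1 \<times> S2"
    then have "\<forall>u\<in>supp t. \<psi> (bas (fst u)) (fst v) = 0 \<or> \<psi> (bas (snd u)) (snd v) = 0"
      using assms unfolding supp_def mem_Times_iff by blast
    then have "tmap \<psi> t v = 0" unfolding tmap_def by (auto intro!: sum.neutral)
    then show False using v by (simp add: supp_def)
  qed
qed

lemma klinear_apply_mult:
  assumes lin: "klinear \<phi>" and "finite S1" "finite S2" "supp f \<subseteq> S1" "supp g \<subseteq> S2"
  shows "\<phi> f p1 * \<phi> g p2
       = (\<Sum>v\<in>S1 \<times> S2. f (fst v) * g (snd v) * \<phi> (bas (fst v)) p1 * \<phi> (bas (snd v)) p2)"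
proof -
  have "\<phi> f p1 * \<phi> g p2 = (\<Sum>v1\<in>S1. f v1 * \<phi> (bas v1) p1) * (\<Sum>v2\<in>S2. g v2 * \<phi> (bas v2) p2)"
    using assms by (simp add: klinear_apply_superset)
  also have "\<dots> = (\<Sum>v1\<in>S1. \<Sum>v2\<in>S2. (f v1 * \<phi> (bas v1) p1) * (g v2 * \<phi> (bas v2) p2))"
    by (rule sum_product)
  also have "\<dots> = (\<Sum>v\<in>S1 \<times> S2. f (fst v) * g (snd v) * \<phi> (bas (fst v)) p1 * \<phi> (bas (snd v)) p2)"
    by (simp add: sum.cartesian_product case_prod_beta mult_ac)
  finally show ?thesis .
qed

lemma tmap_compose:
  assumes lin: "klinear \<phi>" and \<psi>: "\<And>b. \<psi> (bas b) \<in> Hsp" and fin: "finite (supp t)"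
  shows "tmap \<phi> (tmap \<psi> t) = tmap (\<lambda>h. \<phi> (\<psi> h)) t"
proof
  fix p :: "(int \<times> nat) \<times> (int \<times> nat)"
  define S1 where "S1 = (\<Union>u\<in>supp t. supp (\<psi> (bas (fst u))))"
  define S2 where "S2 = (\<Union>u\<in>supp t. supp (\<psi> (bas (snd u))))"
  have fS1: "finite S1" and fS2: "finite S2"
    unfolding S1_def S2_def using fin \<psi> by (auto simp: Hsp_finite_supp)
  have sub1: "supp (\<psi> (bas (fst u))) \<subseteq> S1" and sub2: "supp (\<psi> (bas (snd u))) \<subseteq> S2"
    if "u \<in> supp t" for u
    unfolding S1_def S2_def using that by auto
  let ?\<psi>\<phi> = "\<lambda>u v. t u * \<psi> (bas (fst u)) (fst v) * \<psi> (bas (snd u)) (snd v)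
                      * \<phi> (bas (fst v)) (fst p) * \<phi> (bas (snd v)) (snd p)"
  have "tmap \<phi> (tmap \<psi> t) p = (\<Sum>v\<in>S1 \<times> S2. \<Sum>u\<in>supp t. ?\<psi>\<phi> u v)"
    by (simp add: tmap_eq_sum_superset[OF finite_cartesian_product[OF fS1 fS2]]
          supp_tmap_subset sub1 sub2)
      (simp add: tmap_def sum_distrib_right)
  also have "\<dots> = (\<Sum>u\<in>supp t. \<Sum>v\<in>S1 \<times> S2. ?\<psi>\<phi> u v)"
    by (rule sum.swap)
  also have "\<dots> = (\<Sum>u\<in>supp t. t u * \<phi> (\<psi> (bas (fst u))) (fst p) * \<phi> (\<psi> (bas (snd u))) (snd p))"
    by (rule sum.cong[OF refl])
      (simp add: mult.assoc klinear_apply_mult[OF lin fS1 fS2 sub1 sub2] sum_distrib_left mult_ac)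
  also have "\<dots> = tmap (\<lambda>h. \<phi> (\<psi> h)) t p" unfolding tmap_def by simp
  finally show "tmap \<phi> (tmap \<psi> t) p = tmap (\<lambda>h. \<phi> (\<psi> h)) t p" .
qed

section \<open>The group of coalgebra automorphisms\<close>

lemma AutcD:
  assumes "\<phi> \<in> Autc q"
  shows "bij_betw \<phi> Hsp Hsp" "klinear \<phi>" "\<And>h. h \<in> Hsp \<Longrightarrow> Delta q (\<phi> h) = tmap \<phi> (Delta q h)"
    "\<And>h. h \<in> Hsp \<Longrightarrow> eps (\<phi> h) = eps h" "\<phi> \<in> extensional Hsp"
  using assms by (auto simp: Autc_def coalg_aut_def)

lemma AutcI:
  assumes "bij_betw \<phi> Hsp Hsp" "klinear \<phi>" "\<And>h. h \<in> Hsp \<Longrightarrow> Delta q (\<phi> h) = tmap \<phi> (Delta q h)"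
    "\<And>h. h \<in> Hsp \<Longrightarrow> eps (\<phi> h) = eps h" "\<phi> \<in> extensional Hsp"
  shows "\<phi> \<in> Autc q"
  using assms by (auto simp: Autc_def coalg_aut_def)

lemma Autc_in_Hsp: "\<phi> \<in> Autc q \<Longrightarrow> h \<in> Hsp \<Longrightarrow> \<phi> h \<in> Hsp"
  using AutcD(1) bij_betwE by blast

lemma Autc_inj: "\<phi> \<in> Autc q \<Longrightarrow> g \<in> Hsp \<Longrightarrow> h \<in> Hsp \<Longrightarrow> \<phi> g = \<phi> h \<Longrightarrow> g = h"
  using AutcD(1) by (metis bij_betw_imp_inj_on inj_onD)

lemma Autc_compose:
  fixes q :: "'k::field"
  assumes \<phi>: "\<phi> \<in> Autc q" and \<psi>: "\<psi> \<in> Autc q"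
  shows "compose Hsp \<phi> \<psi> \<in> Autc q"
proof (rule AutcI)
  show "bij_betw (compose Hsp \<phi> \<psi>) Hsp Hsp"
    by (rule bij_betw_compose[OF AutcD(1)[OF \<psi>] AutcD(1)[OF \<phi>]])
  show "klinear (compose Hsp \<phi> \<psi>)"
    by (rule klinear_compose[OF AutcD(2)[OF \<phi>] AutcD(2)[OF \<psi>] Autc_in_Hsp[OF \<psi>]])
  fix h :: "'k hel" assume h: "h \<in> Hsp"
  have "Delta q (compose Hsp \<phi> \<psi> h) = tmap \<phi> (tmap \<psi> (Delta q h))"
    using h AutcD(3)[OF \<phi> Autc_in_Hsp[OF \<psi> h]] AutcD(3)[OF \<psi> h] by (simp add: compose_eq)
  also have "\<dots> = tmap (compose Hsp \<phi> \<psi>) (Delta q h)"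
    by (simp add: tmap_compose[of \<phi> \<psi>, OF AutcD(2)[OF \<phi>] Autc_in_Hsp[OF \<psi> bas_in_Hsp] finite_supp_Delta[OF h]]
                  compose_eq cong: tmap_cong)
  finally show "Delta q (compose Hsp \<phi> \<psi> h) = tmap (compose Hsp \<phi> \<psi>) (Delta q h)" .
  show "eps (compose Hsp \<phi> \<psi> h) = eps h"
    using h AutcD(4)[OF \<phi> Autc_in_Hsp[OF \<psi> h]] AutcD(4)[OF \<psi> h] by (simp add: compose_eq)
qed simp

lemma restrict_id_Autc: "restrict id Hsp \<in> Autc q"
proof (rule AutcI)
  show "klinear (restrict id Hsp)" unfolding klinear_def by (simp add: Hsp_add Hsp_smult)
  fix h :: "'a hel" assume h: "h \<in> Hsp"
  show "Delta q (restrict id Hsp h) = tmap (restrict id Hsp) (Delta q h)"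
    using h tmap_restrict_id[OF finite_supp_Delta[OF h]] by simp
  show "eps (restrict id Hsp h) = eps h" using h by simp
qed (simp_all add: bij_betw_id)

lemma Autc_inv_into:
  fixes q :: "'k::field"
  assumes \<phi>: "\<phi> \<in> Autc q"
  shows "restrict (inv_into Hsp \<phi>) Hsp \<in> Autc q"
    and "compose Hsp (restrict (inv_into Hsp \<phi>) Hsp) \<phi> = restrict id Hsp"
proof -
  define \<psi> where "\<psi> = restrict (inv_into Hsp \<phi>) Hsp"
  have bij: "bij_betw \<psi> Hsp Hsp" using bij_betw_inv_into[OF AutcD(1)[OF \<phi>]] by (simp add: \<psi>_def)
  have \<psi>: "\<psi> h \<in> Hsp" if "h \<in> Hsp" for h using bij that bij_betwE by blast
  have \<phi>\<psi>: "\<phi> (\<psi> h) = h" if "h \<in> Hsp" for h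
    using AutcD(1)[OF \<phi>] that by (simp add: \<psi>_def bij_betw_def f_inv_into_f)
  have \<psi>\<phi>: "\<psi> (\<phi> h) = h" if "h \<in> Hsp" for h
    using AutcD(1)[OF \<phi>] Autc_in_Hsp[OF \<phi> that] that by (simp add: \<psi>_def bij_betw_def inv_into_f_f)
  have lin: "klinear \<psi>" unfolding \<psi>_def by (rule klinear_inv_into[OF AutcD(1,2)[OF \<phi>]])
  have "\<psi> \<in> Autc q"
  proof (rule AutcI[OF bij lin])
    fix h :: "'k hel" assume h: "h \<in> Hsp"
    have "tmap \<psi> (Delta q h) = tmap \<psi> (tmap \<phi> (Delta q (\<psi> h)))"
      using AutcD(3)[OF \<phi> \<psi>[OF h]] \<phi>\<psi>[OF h] by simp
    also have "\<dots> = tmap (\<lambda>x. \<psi> (\<phi> x)) (Delta q (\<psi> h))"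
      by (rule tmap_compose[of \<psi> \<phi>, OF lin Autc_in_Hsp[OF \<phi> bas_in_Hsp] finite_supp_Delta[OF \<psi>[OF h]]])
    also have "\<dots> = tmap (restrict id Hsp) (Delta q (\<psi> h))"
      by (rule tmap_cong) (simp add: \<psi>\<phi>)
    also have "\<dots> = Delta q (\<psi> h)" by (rule tmap_restrict_id[OF finite_supp_Delta[OF \<psi>[OF h]]])
    finally show "Delta q (\<psi> h) = tmap \<psi> (Delta q h)" by simp
    show "eps (\<psi> h) = eps h" using AutcD(4)[OF \<phi> \<psi>[OF h]] \<phi>\<psi>[OF h] by simp
  qed (simp add: \<psi>_def)
  then show "restrict (inv_into Hsp \<phi>) Hsp \<in> Autc q" by (simp only: \<psi>_def)
  have "compose Hsp \<psi> \<phi> = restrict id Hsp" by (rule ext) (simp add: compose_def \<psi>\<phi>)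
  then show "compose Hsp (restrict (inv_into Hsp \<phi>) Hsp) \<phi> = restrict id Hsp" by (simp only: \<psi>_def)
qed

lemma AutcG_simps [simp]:
  "carrier (AutcG q) = Autc q" "mult (AutcG q) = compose Hsp" "one (AutcG q) = restrict id Hsp"
  unfolding AutcG_def by simp_all

lemma group_AutcG: "group (AutcG q)"
proof (rule groupI)
  fix \<phi> \<psi> \<chi> assume "\<phi> \<in> carrier (AutcG q)" "\<psi> \<in> carrier (AutcG q)" "\<chi> \<in> carrier (AutcG q)"
  then have "\<chi> \<in> Hsp \<rightarrow> Hsp" using Autc_in_Hsp by auto
  then show "\<phi> \<otimes>\<^bsub>AutcG q\<^esub> \<psi> \<otimes>\<^bsub>AutcG q\<^esub> \<chi> = \<phi> \<otimes>\<^bsub>AutcG q\<^esub> (\<psi> \<otimes>\<^bsub>AutcG q\<^esub> \<chi>)"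
    by (simp add: compose_assoc)
next
  fix \<phi> assume "\<phi> \<in> carrier (AutcG q)"
  then show "\<one>\<^bsub>AutcG q\<^esub> \<otimes>\<^bsub>AutcG q\<^esub> \<phi> = \<phi>"
    by (auto intro!: extensionalityI[OF compose_extensional AutcD(5)] simp: compose_eq Autc_in_Hsp)
next
  fix \<phi> assume "\<phi> \<in> carrier (AutcG q)"
  then show "\<exists>\<psi>\<in>carrier (AutcG q). \<psi> \<otimes>\<^bsub>AutcG q\<^esub> \<phi> = \<one>\<^bsub>AutcG q\<^esub>"
    using Autc_inv_into[of \<phi> q] by auto
qed (use Autc_compose restrict_id_Autc in auto)

lemma AutcG_inv:
  assumes \<phi>: "\<phi> \<in> Autc q"
  shows "inv\<^bsub>AutcG q\<^esub> \<phi> \<in> Autc q"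
    and "h \<in> Hsp \<Longrightarrow> (inv\<^bsub>AutcG q\<^esub> \<phi>) (\<phi> h) = h"
    and "h \<in> Hsp \<Longrightarrow> \<phi> ((inv\<^bsub>AutcG q\<^esub> \<phi>) h) = h"
proof -
  interpret group "AutcG q" by (rule group_AutcG)
  have \<phi>': "\<phi> \<in> carrier (AutcG q)" using \<phi> by simp
  show "inv\<^bsub>AutcG q\<^esub> \<phi> \<in> Autc q" using inv_closed[OF \<phi>'] by simp
  assume h: "h \<in> Hsp"
  show "(inv\<^bsub>AutcG q\<^esub> \<phi>) (\<phi> h) = h"
    using fun_cong[OF l_inv[OF \<phi>'], of h] h by (simp add: compose_eq)
  show "\<phi> ((inv\<^bsub>AutcG q\<^esub> \<phi>) h) = h"
    using fun_cong[OF r_inv[OF \<phi>'], of h] h by (simp add: compose_eq)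
qed

section \<open>Coalgebra automorphisms on group-likes and skew primitives\<close>

lemma grouplike_eq_bas:
  fixes g :: "'k::field hel"
  assumes g: "g \<in> Hsp" and \<Delta>: "\<And>p. Delta q g p = g (fst p) * g (snd p)" and \<epsilon>: "eps g = 1"
  shows "\<exists>a. g = bas (a,0)"
proof -
  have deg_pos: "g (c,m) = 0" if "0 < m" for c m
    using \<Delta>[of "((c,m),(c,m))"] that by (simp add: Delta_eq[OF g])
  have deg_0: "g (a,0) * g (b,0) = (if a = b then g (a,0) else 0)" for a b
    using \<Delta>[of "((a,0),(b,0))"] by (simp add: Delta_eq[OF g] eq_commute)
  have "supp g \<noteq> {}" using \<epsilon> by (auto simp: eps_def)
  then obtain a m where am: "(a,m) \<in> supp g" by auto
  then have "m = 0" using deg_pos by (auto simp: supp_def)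
  then have "g (a,0) = 1" using am deg_0[of a a] by (simp add: supp_def)
  then have "g = bas (a,0)"
    using deg_pos deg_0 by (auto simp: fun_eq_iff bas_def split: if_splits) (metis mult_1 gr0I)
  then show ?thesis by blast
qed

lemma skew_primitive_eq:
  fixes u :: "'k::field hel"
  assumes qn: "\<forall>n::nat. n > 0 \<longrightarrow> q ^ n \<noteq> 1" and u: "u \<in> Hsp"
    and \<Delta>: "\<And>p. Delta q u p = u (fst p) * bas (s,0) (snd p) + bas (t,0) (fst p) * u (snd p)"
  shows "\<exists>\<alpha> \<beta>. u = (\<lambda>c. \<alpha> * bas (t,1) c + \<beta> * (bas (s,0) c - bas (t,0) c)) \<and> (\<alpha> \<noteq> 0 \<longrightarrow> s = t + 1)"
proof -
  have \<Delta>': "(if b = a + int i then qbinom q (i+j) i * u (a, i+j) else 0)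
     = u (a,i) * bas (s,0) (b,j) + bas (t,0) (a,i) * u (b,j)" for a i b j
    using \<Delta>[of "((a,i),(b,j))"] by (simp add: Delta_eq[OF u])
  have deg_ge_2: "u (c,m) = 0" if "2 \<le> m" for c m
  proof -
    have "qbinom q m 1 * u (c,m) = 0" using \<Delta>'[of "c+1" c 1 "m-1"] that by (simp add: bas_def)
    moreover have "qbinom q m 1 \<noteq> 0" by (rule qbinom_1_nonzero[OF qn]) (use that in simp)
    ultimately show ?thesis by simp
  qed
  have deg_1: "u (c,1) = 0" if "c \<noteq> t" for c
    using \<Delta>'[of c c 0 1] that by (simp add: bas_def)
  have shift: "s = t + 1" if "u (t,1) \<noteq> 0"
    using \<Delta>'[of "t+1" t 1 0] that by (auto simp: bas_def split: if_splits)
  have deg_0: "u (a,0) = 0" if "a \<noteq> s" "a \<noteq> t" for a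
    using \<Delta>'[of a a 0 0] that by (simp add: bas_def)
  have deg_0_st: "u (t,0) = - u (s,0)" if "s \<noteq> t"
    using \<Delta>'[of s t 0 0] that by (simp add: bas_def eq_neg_iff_add_eq_0 add.commute)
  have deg_0_ss: "u (s,0) = 0" if "s = t"
  proof -
    have "u (s,0) = u (s,0) * 1 + 1 * u (s,0)" using \<Delta>'[of s s 0 0] that by (simp add: bas_def)
    then show ?thesis by (metis add_cancel_right_right mult_1 mult_1_right)
  qed
  define \<beta> where "\<beta> = (if s = t then 0 else u (s,0))"
  have "u = (\<lambda>c. u (t,1) * bas (t,1) c + \<beta> * (bas (s,0) c - bas (t,0) c))"
  proof
    fix c :: "int \<times> nat"
    obtain a m where c: "c = (a,m)" by (cases c)
    consider "2 \<le> m" | "m = 1" | "m = 0" by linarith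
    then show "u c = u (t,1) * bas (t,1) c + \<beta> * (bas (s,0) c - bas (t,0) c)"
    proof cases
      case 1 then show ?thesis using deg_ge_2 c by (simp add: bas_def)
    next
      case 2 then show ?thesis using deg_1 c by (cases "a = t") (auto simp: bas_def)
    next
      case 3 then show ?thesis using deg_0 deg_0_st deg_0_ss c \<beta>_def
        by (cases "a = s"; cases "a = t") (auto simp: bas_def)
    qed
  qed
  then show ?thesis using shift by blast
qed

text \<open>By \<open>skew_primitive_eq\<close>, every \<open>u\<close> with \<open>\<Delta> u = u \<otimes> x^(n+1) + x^n \<otimes> u\<close> has this form.\<close>

definition skew_prim :: "int \<Rightarrow> 'k::field \<Rightarrow> 'k \<Rightarrow> 'k hel" where
  "skew_prim n a b = (\<lambda>c. a * bas (n,1) c + b * (bas (n+1,0) c - bas (n,0) c))"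

lemma skew_prim_in_Hsp [simp]: "skew_prim n a b \<in> Hsp"
  unfolding skew_prim_def
  by (rule Hsp_if_zero_outside[of "{(n,1),(n+1,0),(n,0)}"]) (auto simp: bas_def)

lemma skew_prim_1_0 [simp]: "skew_prim n 1 0 = bas (n,1)"
  by (simp add: skew_prim_def)

lemma skew_prim_inject:
  assumes "a \<noteq> 0" "skew_prim n a b = skew_prim n' a' b'"
  shows "n' = n \<and> a' = a \<and> b' = b"
proof -
  have 1: "skew_prim n a b (n,1) = skew_prim n' a' b' (n,1)" using assms(2) by simp
  then have n: "n' = n" using assms(1) by (auto simp: skew_prim_def bas_def split: if_splits)
  have "skew_prim n a b (n+1,0) = skew_prim n' a' b' (n+1,0)" using assms(2) by simp
  then show ?thesis using 1 n by (simp add: skew_prim_def bas_def)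
qed

lemma klinear_apply_skew_prim:
  assumes "klinear \<phi>" and "\<And>n. \<phi> (bas (n,0)) = bas (n+k,0)"
    and "\<And>n. \<phi> (bas (n,1)) = skew_prim (n+k) (\<alpha> n) (\<beta> n)"
  shows "\<phi> (skew_prim n a b) = skew_prim (n+k) (a * \<alpha> n) (a * \<beta> n + b)"
proof -
  have "\<phi> (skew_prim n a b) = (\<lambda>c. a * \<phi> (bas (n,1)) c + b * (\<phi> (bas (n+1,0)) c - \<phi> (bas (n,0)) c))"
    unfolding skew_prim_def by (rule klinear_combination[OF assms(1) bas_in_Hsp bas_in_Hsp bas_in_Hsp])
  then show ?thesis
    unfolding assms(2,3) by (simp add: skew_prim_def fun_eq_iff algebra_simps)
qed

lemma Autc_grouplike:
  assumes \<phi>: "\<phi> \<in> Autc q"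
  shows "\<exists>a. \<phi> (bas (n,0)) = bas (a,0)"
proof (rule grouplike_eq_bas[of _ q])
  show "\<phi> (bas (n,0)) \<in> Hsp" by (rule Autc_in_Hsp[OF \<phi> bas_in_Hsp])
  show "Delta q (\<phi> (bas (n,0))) p = \<phi> (bas (n,0)) (fst p) * \<phi> (bas (n,0)) (snd p)" for p
    using AutcD(3)[OF \<phi> bas_in_Hsp, of "(n,0)"] by (simp add: Delta_bas Delta_basis_0 tmap_bas)
  show "eps (\<phi> (bas (n,0))) = 1" using AutcD(4)[OF \<phi> bas_in_Hsp, of "(n,0)"] by (simp add: eps_bas)
qed

lemma Autc_skew_prim:
  fixes q :: "'k::field"
  assumes qn: "\<forall>n::nat. n > 0 \<longrightarrow> q ^ n \<noteq> 1" and \<phi>: "\<phi> \<in> Autc q"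
    and \<sigma>: "\<And>n. \<phi> (bas (n,0)) = bas (\<sigma> n,0)"
  shows "\<exists>\<alpha> \<beta>. \<alpha> \<noteq> 0 \<and> \<sigma> (n+1) = \<sigma> n + 1 \<and> \<phi> (bas (n,1)) = skew_prim (\<sigma> n) \<alpha> \<beta>"
proof -
  let ?u = "\<phi> (bas (n,1))"
  have "Delta q ?u p = ?u (fst p) * bas (\<sigma> (n+1),0) (snd p) + bas (\<sigma> n,0) (fst p) * ?u (snd p)" for p
  proof -
    have "Delta q ?u p = tmap \<phi> (Delta_basis q (n,1)) p"
      using AutcD(3)[OF \<phi> bas_in_Hsp, of "(n,1)"] by (simp add: Delta_bas)
    also have "\<dots> = (\<Sum>w\<in>{((n,1),(n+1,0)), ((n,0),(n,1))}.
        Delta_basis q (n,1) w * \<phi> (bas (fst w)) (fst p) * \<phi> (bas (snd w)) (snd p))"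
      by (rule tmap_eq_sum_superset, simp, unfold Delta_basis_1) (auto simp: supp_def bas_def)
    also have "\<dots> = ?u (fst p) * bas (\<sigma> (n+1),0) (snd p) + bas (\<sigma> n,0) (fst p) * ?u (snd p)"
      by (simp add: Delta_basis_eq \<sigma>)
    finally show ?thesis .
  qed
  then obtain \<alpha> \<beta> where u: "?u = (\<lambda>c. \<alpha> * bas (\<sigma> n,1) c + \<beta> * (bas (\<sigma> (n+1),0) c - bas (\<sigma> n,0) c))"
    and \<alpha>: "\<alpha> \<noteq> 0 \<longrightarrow> \<sigma> (n+1) = \<sigma> n + 1"
    using skew_primitive_eq[OF qn Autc_in_Hsp[OF \<phi> bas_in_Hsp]] by blast
  have "\<alpha> \<noteq> 0"
  proof
    assume "\<alpha> = 0"
    \<comment> \<open>then \<open>\<phi> (x^n y)\<close> would lie in the image of the span of \<open>x^n, x^(n+1)\<close>\<close>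
    then have "\<phi> (skew_prim n 0 \<beta>) = \<phi> (bas (n,1))"
      unfolding skew_prim_def u
      by (simp only: klinear_combination[OF AutcD(2)[OF \<phi>] bas_in_Hsp bas_in_Hsp bas_in_Hsp] \<sigma>)
        simp
    then have "skew_prim n 0 \<beta> = bas (n,1)"
      by (rule Autc_inj[OF \<phi> skew_prim_in_Hsp bas_in_Hsp])
    then have "skew_prim n 0 \<beta> (n,1) = (bas (n,1) :: 'k hel) (n,1)" by (simp only:)
    then show False by (simp add: skew_prim_def bas_def)
  qed
  then show ?thesis using u \<alpha> by (auto simp: skew_prim_def)
qed

lemma Autc_structure:
  fixes q :: "'k::field"
  assumes qn: "\<forall>n::nat. n > 0 \<longrightarrow> q ^ n \<noteq> 1" and \<phi>: "\<phi> \<in> Autc q"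
  obtains \<alpha> k \<beta> where "\<And>n. \<alpha> n \<noteq> 0" "\<And>n. \<phi> (bas (n,0)) = bas (n+k,0)"
    "\<And>n. \<phi> (bas (n,1)) = skew_prim (n+k) (\<alpha> n) (\<beta> n)"
proof -
  have "\<forall>n. \<exists>a. \<phi> (bas (n,0)) = bas (a,0)" using Autc_grouplike[OF \<phi>] by blast
  then obtain \<sigma> where \<sigma>: "\<And>n. \<phi> (bas (n,0)) = bas (\<sigma> n,0)"
    unfolding choice_iff by blast
  have "\<forall>n. \<exists>\<alpha>. \<exists>\<beta>. \<alpha> \<noteq> 0 \<and> \<sigma> (n+1) = \<sigma> n + 1 \<and> \<phi> (bas (n,1)) = skew_prim (\<sigma> n) \<alpha> \<beta>"
    using Autc_skew_prim[OF qn \<phi> \<sigma>] by blast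
  then obtain \<alpha> where "\<forall>n. \<exists>\<beta>. \<alpha> n \<noteq> 0 \<and> \<sigma> (n+1) = \<sigma> n + 1 \<and> \<phi> (bas (n,1)) = skew_prim (\<sigma> n) (\<alpha> n) \<beta>"
    unfolding choice_iff by blast
  then obtain \<beta> where \<alpha>\<beta>: "\<And>n. \<alpha> n \<noteq> 0 \<and> \<sigma> (n+1) = \<sigma> n + 1 \<and> \<phi> (bas (n,1)) = skew_prim (\<sigma> n) (\<alpha> n) (\<beta> n)"
    unfolding choice_iff by blast
  have \<sigma>_shift: "\<sigma> n = n + \<sigma> 0" for n
  proof (induction n rule: int_induct[where k=0])
    case (step1 i) then show ?case using \<alpha>\<beta>[of i] by simp
  next
    case (step2 i) then show ?case using \<alpha>\<beta>[of "i - 1"] by simp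
  qed simp
  show thesis
  proof (rule that[of \<alpha> "\<sigma> 0" \<beta>])
    fix n
    show "\<alpha> n \<noteq> 0" using \<alpha>\<beta> by blast
    show "\<phi> (bas (n,0)) = bas (n + \<sigma> 0, 0)" by (simp only: \<sigma> \<sigma>_shift[of n])
    show "\<phi> (bas (n,1)) = skew_prim (n + \<sigma> 0) (\<alpha> n) (\<beta> n)"
      using \<alpha>\<beta>[of n] \<sigma>_shift[of n] by simp
  qed
qed

section \<open>The normal subgroup \<open>Aut\<^sub>*(H)\<close>\<close>

lemma restrict_id_Aut0: "restrict id Hsp \<in> Aut0 q"
  by (simp add: Aut0_def restrict_id_Autc)

lemma Aut0_structure:
  fixes q :: "'k::field"
  assumes qn: "\<forall>n::nat. n > 0 \<longrightarrow> q ^ n \<noteq> 1" and \<phi>: "\<phi> \<in> Aut0 q"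
  obtains \<alpha> \<beta> where "\<And>n. \<alpha> n \<noteq> 0" "\<And>n. \<phi> (bas (n,0)) = bas (n,0)"
    "\<And>n. \<phi> (bas (n,1)) = skew_prim n (\<alpha> n) (\<beta> n)"
proof -
  have \<phi>c: "\<phi> \<in> Autc q" and \<phi>1: "\<phi> (bas (0,0)) = bas (0,0)" using \<phi> by (auto simp: Aut0_def)
  obtain \<alpha> k \<beta> where \<alpha>: "\<And>n. \<alpha> n \<noteq> 0" and \<phi>0: "\<And>n. \<phi> (bas (n,0)) = bas (n+k,0)"
    and \<phi>y: "\<And>n. \<phi> (bas (n,1)) = skew_prim (n+k) (\<alpha> n) (\<beta> n)"
    using Autc_structure[OF qn \<phi>c] by metis
  have "bas (k,0) = (bas (0,0) :: 'k hel)" using \<phi>0[of 0] unfolding \<phi>1 by simp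
  then have k: "k = 0" by simp
  show thesis
  proof (rule that[of \<alpha> \<beta>])
    fix n
    show "\<alpha> n \<noteq> 0" by (rule \<alpha>)
    show "\<phi> (bas (n,0)) = bas (n,0)" using \<phi>0[of n] k by simp
    show "\<phi> (bas (n,1)) = skew_prim n (\<alpha> n) (\<beta> n)" using \<phi>y[of n] k by simp
  qed
qed

lemma Autstar_skew_prim_iff:
  "\<phi> \<in> Autstar q \<longleftrightarrow> \<phi> \<in> Aut0 q \<and> (\<forall>n. \<exists>\<beta>. \<phi> (bas (n,1)) = skew_prim n 1 \<beta>)"
  by (simp add: Autstar_def skew_prim_def)

lemma AutstarI:
  assumes "\<phi> \<in> Autc q" "\<And>n. \<phi> (bas (n,0)) = bas (n,0)" "\<And>n. \<phi> (bas (n,1)) = skew_prim n 1 (\<beta> n)"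
  shows "\<phi> \<in> Autstar q"
  using assms by (auto simp: Autstar_skew_prim_iff Aut0_def)

lemma AutstarE:
  fixes q :: "'k::field"
  assumes qn: "\<forall>n::nat. n > 0 \<longrightarrow> q ^ n \<noteq> 1" and \<phi>: "\<phi> \<in> Autstar q"
  obtains \<beta> where "\<phi> \<in> Autc q" "\<And>n. \<phi> (bas (n,0)) = bas (n,0)"
    "\<And>n a b. \<phi> (skew_prim n a b) = skew_prim n a (a * \<beta> n + b)"
proof -
  have \<phi>0: "\<phi> \<in> Aut0 q" and \<phi>y: "\<And>n. \<exists>\<beta>. \<phi> (bas (n,1)) = skew_prim n 1 \<beta>"
    using \<phi> by (auto simp: Autstar_skew_prim_iff)
  obtain \<alpha> \<beta> where \<alpha>: "\<And>n. \<alpha> n \<noteq> 0" and \<phi>x: "\<And>n. \<phi> (bas (n,0)) = bas (n,0)"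
    and \<phi>\<alpha>: "\<And>n. \<phi> (bas (n,1)) = skew_prim n (\<alpha> n) (\<beta> n)"
    using Aut0_structure[OF qn \<phi>0] by metis
  have "\<alpha> n = 1" for n
    using \<phi>y[of n] \<phi>\<alpha>[of n] skew_prim_inject[OF \<alpha>[of n]] by fastforce
  then have "\<phi> (skew_prim n a b) = skew_prim n a (a * \<beta> n + b)" for n a b
    using klinear_apply_skew_prim[of \<phi> 0 \<alpha> \<beta>] AutcD(2)[of \<phi> q] \<phi>0 \<phi>x \<phi>\<alpha>
    by (simp add: Aut0_def)
  then show thesis using that \<phi>0 \<phi>x by (simp add: Aut0_def)
qed

lemma restrict_id_Autstar: "restrict id Hsp \<in> Autstar q"
  by (rule AutstarI[where \<beta>="\<lambda>_. 0"]) (simp_all add: restrict_id_Autc)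

lemma subgroup_Autstar:
  fixes q :: "'k::field"
  assumes qn: "\<forall>n::nat. n > 0 \<longrightarrow> q ^ n \<noteq> 1"
  shows "subgroup (Autstar q) (AutcG q)"
proof (rule group.subgroupI[OF group_AutcG])
  show "Autstar q \<subseteq> carrier (AutcG q)" by (auto simp: Autstar_def Aut0_def)
  show "Autstar q \<noteq> {}" using restrict_id_Autstar by blast
next
  fix \<phi> assume "\<phi> \<in> Autstar q"
  then obtain \<beta> where \<phi>: "\<phi> \<in> Autc q" and \<phi>x: "\<And>n. \<phi> (bas (n,0)) = bas (n,0)"
    and \<phi>y: "\<And>n a b. \<phi> (skew_prim n a b) = skew_prim n a (a * \<beta> n + b)"
    using AutstarE[OF qn] by metis
  let ?\<psi> = "inv\<^bsub>AutcG q\<^esub> \<phi>"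
  have "?\<psi> (bas (n,0)) = bas (n,0)" for n
    using AutcG_inv(2)[OF \<phi> bas_in_Hsp, of "(n,0)"] \<phi>x by simp
  moreover have "?\<psi> (bas (n,1)) = skew_prim n 1 (- \<beta> n)" for n
    using AutcG_inv(2)[OF \<phi> skew_prim_in_Hsp, of n 1 "- \<beta> n"] \<phi>y by simp
  ultimately show "?\<psi> \<in> Autstar q" by (intro AutstarI AutcG_inv(1)[OF \<phi>])
next
  fix \<phi> \<psi> assume "\<phi> \<in> Autstar q" "\<psi> \<in> Autstar q"
  then obtain \<beta> \<gamma> where \<phi>: "\<phi> \<in> Autc q" and \<phi>x: "\<And>n. \<phi> (bas (n,0)) = bas (n,0)"
    and \<phi>y: "\<And>n a b. \<phi> (skew_prim n a b) = skew_prim n a (a * \<beta> n + b)"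
    and \<psi>: "\<psi> \<in> Autc q" and \<psi>x: "\<And>n. \<psi> (bas (n,0)) = bas (n,0)"
    and \<psi>y: "\<And>n a b. \<psi> (skew_prim n a b) = skew_prim n a (a * \<gamma> n + b)"
    using AutstarE[OF qn] by metis
  have "compose Hsp \<phi> \<psi> (bas (n,1)) = skew_prim n 1 (\<beta> n + \<gamma> n)" for n
    using \<psi>y[of n 1 0] by (simp add: compose_eq \<phi>y)
  then show "\<phi> \<otimes>\<^bsub>AutcG q\<^esub> \<psi> \<in> Autstar q"
    by (auto intro!: AutstarI Autc_compose[OF \<phi> \<psi>] simp: compose_eq \<phi>x \<psi>x)
qed

lemma Autstar_if_intertwines:
  fixes q :: "'k::field"
  assumes qn: "\<forall>n::nat. n > 0 \<longrightarrow> q ^ n \<noteq> 1"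
    and \<chi>: "\<chi> \<in> Autc q" and \<eta>: "\<eta> \<in> Autstar q" and \<psi>c: "\<psi> \<in> Autc q"
    and \<psi>\<chi>: "\<And>g. g \<in> Hsp \<Longrightarrow> \<psi> (\<chi> g) = \<chi> (\<eta> g)"
  shows "\<psi> \<in> Autstar q"
proof -
  obtain \<gamma> where \<eta>x: "\<And>n. \<eta> (bas (n,0)) = bas (n,0)"
    and \<eta>y: "\<And>n a b. \<eta> (skew_prim n a b) = skew_prim n a (a * \<gamma> n + b)"
    using AutstarE[OF qn \<eta>] by metis
  obtain \<alpha> k \<beta> where \<alpha>: "\<And>n. \<alpha> n \<noteq> 0" and \<chi>x: "\<And>n. \<chi> (bas (n,0)) = bas (n+k,0)"
    and \<chi>y: "\<And>n. \<chi> (bas (n,1)) = skew_prim (n+k) (\<alpha> n) (\<beta> n)"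
    using Autc_structure[OF qn \<chi>] by metis
  have \<psi>x: "\<psi> (bas (m,0)) = bas (m,0)" for m
    using \<psi>\<chi>[OF bas_in_Hsp, of "(m-k,0)"] by (simp add: \<chi>x \<eta>x)
  then obtain \<alpha>' \<beta>' where \<alpha>': "\<And>n. \<alpha>' n \<noteq> 0"
    and \<psi>y: "\<And>n. \<psi> (bas (n,1)) = skew_prim n (\<alpha>' n) (\<beta>' n)"
    using Aut0_structure[OF qn, of \<psi>] \<psi>c by (auto simp: Aut0_def)
  have "\<alpha>' m = 1" for m
  proof -
    let ?n = "m - k"
    have "\<psi> (skew_prim m (\<alpha> ?n) (\<beta> ?n)) = skew_prim m (\<alpha> ?n * \<alpha>' m) (\<alpha> ?n * \<beta>' m + \<beta> ?n)"
      using klinear_apply_skew_prim[OF AutcD(2)[OF \<psi>c], of 0 \<alpha>' \<beta>'] \<psi>x \<psi>y by simp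
    moreover have "\<psi> (skew_prim m (\<alpha> ?n) (\<beta> ?n)) = skew_prim m (\<alpha> ?n) (\<beta> ?n + \<gamma> ?n)"
    proof -
      have A: "\<chi> (bas (?n,1)) = skew_prim m (\<alpha> ?n) (\<beta> ?n)" using \<chi>y[of ?n] by simp
      have B: "\<chi> (\<eta> (bas (?n,1))) = skew_prim m (\<alpha> ?n) (\<beta> ?n + \<gamma> ?n)"
        using \<eta>y[of ?n 1 0] klinear_apply_skew_prim[OF AutcD(2)[OF \<chi>] \<chi>x \<chi>y, of ?n 1 "\<gamma> ?n"]
        by simp
      show ?thesis using \<psi>\<chi>[OF bas_in_Hsp, of "(?n,1)"] unfolding A B .
    qed
    ultimately have "skew_prim m (\<alpha> ?n * \<alpha>' m) (\<alpha> ?n * \<beta>' m + \<beta> ?n)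
                   = skew_prim m (\<alpha> ?n) (\<beta> ?n + \<gamma> ?n)" by simp
    then have "\<alpha> ?n = \<alpha> ?n * \<alpha>' m" using skew_prim_inject \<alpha> \<alpha>' by (metis no_zero_divisors)
    then show ?thesis using \<alpha>[of ?n] by simp
  qed
  then show "\<psi> \<in> Autstar q" using \<psi>c \<psi>x \<psi>y by (intro AutstarI) auto
qed

lemma normal_Autstar:
  fixes q :: "'k::field"
  assumes qn: "\<forall>n::nat. n > 0 \<longrightarrow> q ^ n \<noteq> 1"
  shows "Autstar q \<lhd> AutcG q"
  unfolding group.normal_inv_iff[OF group_AutcG]
proof (intro conjI ballI subgroup_Autstar[OF qn])
  fix \<chi> \<eta> assume "\<chi> \<in> carrier (AutcG q)" and \<eta>: "\<eta> \<in> Autstar q"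
  then have \<chi>: "\<chi> \<in> Autc q" by simp
  have \<eta>c: "\<eta> \<in> Autc q" using \<eta> by (auto simp: Autstar_def Aut0_def)
  let ?\<psi> = "\<chi> \<otimes>\<^bsub>AutcG q\<^esub> \<eta> \<otimes>\<^bsub>AutcG q\<^esub> inv\<^bsub>AutcG q\<^esub> \<chi>"
  show "?\<psi> \<in> Autstar q"
  proof (rule Autstar_if_intertwines[OF qn \<chi> \<eta>])
    show "?\<psi> \<in> Autc q" using \<chi> \<eta>c by (simp add: Autc_compose AutcG_inv(1))
    show "?\<psi> (\<chi> g) = \<chi> (\<eta> g)" if "g \<in> Hsp" for g
      using that Autc_in_Hsp[OF \<chi>] Autc_in_Hsp[OF \<eta>c] Autc_in_Hsp[OF AutcG_inv(1)[OF \<chi>]]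
      by (simp add: compose_eq AutcG_inv(2)[OF \<chi>])
  qed
qed

section \<open>The graded automorphisms\<close>

lemma Hm_iff: "h \<in> Hm m \<longleftrightarrow> h \<in> Hsp \<and> (\<forall>b. snd b \<noteq> m \<longrightarrow> h b = 0)"
  by (auto simp: Hm_def supp_def)

lemma bas_in_Hm: "bas (n,m) \<in> Hm m"
  by (simp add: Hm_iff) (simp add: bas_def)

lemma Hm_in_Hsp: "h \<in> Hm m \<Longrightarrow> h \<in> Hsp"
  unfolding Hm_def by blast

lemma AutgrI: "\<phi> \<in> Autc q \<Longrightarrow> (\<And>h m. h \<in> Hm m \<Longrightarrow> \<phi> h \<in> Hm m) \<Longrightarrow> \<phi> \<in> Autgr q"
  unfolding Autgr_def by blast

lemma Autgr_in_Autc: "\<phi> \<in> Autgr q \<Longrightarrow> \<phi> \<in> Autc q"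
  unfolding Autgr_def by blast

lemma Autgr_in_Hm: "\<phi> \<in> Autgr q \<Longrightarrow> h \<in> Hm m \<Longrightarrow> \<phi> h \<in> Hm m"
  unfolding Autgr_def by blast

lemma Autgr_bas_apply:
  assumes "\<phi> \<in> Autgr q" "snd p \<noteq> i"
  shows "\<phi> (bas (n,i)) p = 0"
proof -
  have "\<phi> (bas (n,i)) \<in> Hm i" by (rule Autgr_in_Hm[OF assms(1) bas_in_Hm])
  then show ?thesis using assms(2) unfolding Hm_iff by blast
qed

lemma Autgr_apply_off_degree:
  assumes \<phi>: "\<phi> \<in> Autgr q" and h: "h \<in> Hsp" and "\<forall>b\<in>supp h. snd b \<noteq> m" and "snd p = m"
  shows "\<phi> h p = 0"
proof -
  have "\<phi> h p = (\<Sum>b\<in>supp h. h b * \<phi> (bas (fst b, snd b)) p)"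
    using klinear_apply[OF AutcD(2)[OF Autgr_in_Autc[OF \<phi>]] h] by simp
  also have "\<dots> = 0"
  proof (rule sum.neutral, rule ballI)
    fix b assume "b \<in> supp h"
    then have "snd b \<noteq> snd p" using assms(3,4) by simp
    then show "h b * \<phi> (bas (fst b, snd b)) p = 0" using Autgr_bas_apply[OF \<phi>, of p "snd b" "fst b"] by simp
  qed
  finally show ?thesis .
qed

lemma Autgr_reflects_Hm:
  assumes \<phi>: "\<phi> \<in> Autgr q" and g: "g \<in> Hsp" and \<phi>g: "\<phi> g \<in> Hm m"
  shows "g \<in> Hm m"
proof -
  have \<phi>c: "\<phi> \<in> Autc q" by (rule Autgr_in_Autc[OF \<phi>])
  define g\<^sub>m where "g\<^sub>m = (\<lambda>b. if snd b = m then g b else 0)"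
  define g' where "g' = (\<lambda>b. if snd b = m then 0 else g b)"
  have "g\<^sub>m \<in> Hm m" and g': "g' \<in> Hsp"
    unfolding Hm_iff g\<^sub>m_def g'_def
    by (auto intro: Hsp_if_zero_outside[OF Hsp_finite_supp[OF g]] simp: supp_def)
  then have \<phi>g\<^sub>m: "\<phi> g\<^sub>m \<in> Hm m" and g\<^sub>m: "g\<^sub>m \<in> Hsp" by (auto intro: Autgr_in_Hm[OF \<phi>] Hm_in_Hsp)
  have split: "\<phi> g = (\<lambda>b. \<phi> g\<^sub>m b + \<phi> g' b)"
    using klinear_add[OF AutcD(2)[OF \<phi>c] g\<^sub>m g'] by (simp add: g\<^sub>m_def g'_def if_distrib cong: if_cong)
  \<comment> \<open>\<open>\<phi> g'\<close> vanishes in degree \<open>m\<close> because \<open>\<phi>\<close> is graded, and elsewhere because \<open>\<phi> g\<close> and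
      \<open>\<phi> g\<^sub>m\<close> do\<close>
  have "\<phi> g' p = 0" for p
  proof (cases "snd p = m")
    case True
    show ?thesis by (rule Autgr_apply_off_degree[OF \<phi> g' _ True]) (auto simp: g'_def supp_def)
  next
    case False
    then have "\<phi> g p = 0" "\<phi> g\<^sub>m p = 0" using \<phi>g \<phi>g\<^sub>m unfolding Hm_iff by blast+
    then show ?thesis using fun_cong[OF split, of p] by simp
  qed
  then have "\<phi> g' = \<phi> (\<lambda>b. 0)" using klinear_zero[OF AutcD(2)[OF \<phi>c]] by auto
  then have "g' = (\<lambda>b. 0)" by (rule Autc_inj[OF \<phi>c g' Hsp_zero])
  then have "g = g\<^sub>m" by (auto simp: fun_eq_iff g\<^sub>m_def g'_def split: if_splits)
  then show ?thesis using \<open>g\<^sub>m \<in> Hm m\<close> by simp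
qed

lemma subgroup_Autgr: "subgroup (Autgr q) (AutcG q)"
proof (rule group.subgroupI[OF group_AutcG])
  show "Autgr q \<subseteq> carrier (AutcG q)" using Autgr_in_Autc by auto
  have "restrict id Hsp \<in> Autgr q" by (rule AutgrI[OF restrict_id_Autc]) (simp add: Hm_in_Hsp)
  then show "Autgr q \<noteq> {}" by blast
next
  fix \<phi> \<psi> assume \<phi>: "\<phi> \<in> Autgr q" and \<psi>: "\<psi> \<in> Autgr q"
  have "compose Hsp \<phi> \<psi> \<in> Autgr q"
  proof (rule AutgrI[OF Autc_compose[OF Autgr_in_Autc[OF \<phi>] Autgr_in_Autc[OF \<psi>]]])
    fix h :: "'a hel" and m assume h: "h \<in> Hm m"
    show "compose Hsp \<phi> \<psi> h \<in> Hm m"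
      using Autgr_in_Hm[OF \<phi> Autgr_in_Hm[OF \<psi> h]] Hm_in_Hsp[OF h] by (simp add: compose_eq)
  qed
  then show "\<phi> \<otimes>\<^bsub>AutcG q\<^esub> \<psi> \<in> Autgr q" by simp
next
  fix \<phi> assume \<phi>: "\<phi> \<in> Autgr q"
  have \<phi>c: "\<phi> \<in> Autc q" by (rule Autgr_in_Autc[OF \<phi>])
  show "inv\<^bsub>AutcG q\<^esub> \<phi> \<in> Autgr q"
  proof (rule AutgrI[OF AutcG_inv(1)[OF \<phi>c]])
    fix h :: "'a hel" and m assume h: "h \<in> Hm m"
    have "\<phi> ((inv\<^bsub>AutcG q\<^esub> \<phi>) h) \<in> Hm m" using h AutcG_inv(3)[OF \<phi>c Hm_in_Hsp[OF h]] by simp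
    then show "(inv\<^bsub>AutcG q\<^esub> \<phi>) h \<in> Hm m"
      by (rule Autgr_reflects_Hm[OF \<phi> Autc_in_Hsp[OF AutcG_inv(1)[OF \<phi>c] Hm_in_Hsp[OF h]]])
  qed
qed

lemma Autc_eq_restrict_id:
  assumes \<phi>: "\<phi> \<in> Autc q" and id_on_bas: "\<And>b. \<phi> (bas b) = bas b"
  shows "\<phi> = restrict id Hsp"
proof (rule extensionalityI[OF AutcD(5)[OF \<phi>] restrict_extensional])
  fix h :: "'a hel" assume h: "h \<in> Hsp"
  have "\<phi> h = (\<lambda>p. \<Sum>b\<in>supp h. h b * bas b p)"
    using klinear_apply[OF AutcD(2)[OF \<phi>] h] id_on_bas by auto
  also have "\<dots> = h" by (rule fun_eq_sum_bas[OF Hsp_finite_supp[OF h] subset_refl, symmetric])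
  finally show "\<phi> h = restrict id Hsp h" using h by simp
qed

lemma tmap_Autgr_Delta_basis:
  assumes \<phi>: "\<phi> \<in> Autgr q" and m: "1 \<le> m"
  shows "tmap \<phi> (Delta_basis q (n,m)) ((a,1),(a+1,m-1))
       = qbinom q m 1 * \<phi> (bas (n,1)) (a,1) * \<phi> (bas (n+1,m-1)) (a+1,m-1)"
proof -
  let ?D = "Delta_basis q (n,m)" and ?w = "((n,1::nat),(n+1,m-1))"
  have "tmap \<phi> ?D ((a,1),(a+1,m-1))
      = (\<Sum>w\<in>supp ?D. ?D w * \<phi> (bas (fst w)) (a,1) * \<phi> (bas (snd w)) (a+1,m-1))"
    unfolding tmap_def by simp
  \<comment> \<open>by gradedness only the summand with left factor in degree 1 survives\<close>
  also have "\<dots> = (if ?w \<in> supp ?D then ?D ?w * \<phi> (bas (fst ?w)) (a,1) * \<phi> (bas (snd ?w)) (a+1,m-1) else 0)"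
  proof (rule sum_eq_single)
    show "finite (supp ?D)" using finite_supp_Delta[OF bas_in_Hsp, of q "(n,m)"] by (simp add: Delta_bas)
  next
    fix w assume w: "w \<in> supp ?D" and ne: "w \<noteq> ?w"
    obtain c i d j where we: "w = ((c,i),(d,j))" by (metis prod.collapse)
    have "?D w \<noteq> 0" using w by (simp add: supp_def)
    then have "c = n" "d = n + int i" "i + j = m"
      using we by (auto simp: Delta_basis_eq split: if_splits)
    then have "i \<noteq> 1" using ne we by auto
    then show "?D w * \<phi> (bas (fst w)) (a,1) * \<phi> (bas (snd w)) (a+1,m-1) = 0"
      using we Autgr_bas_apply[OF \<phi>, of "(a,1)" i c] by simp
  qed
  also have "\<dots> = qbinom q m 1 * \<phi> (bas (n,1)) (a,1) * \<phi> (bas (n+1,m-1)) (a+1,m-1)"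
    using m by (auto simp: supp_def Delta_basis_eq)
  finally show ?thesis .
qed

lemma Autgr_fixes_bas_step:
  fixes q :: "'k::field"
  assumes qn: "\<forall>n::nat. n > 0 \<longrightarrow> q ^ n \<noteq> 1" and \<phi>: "\<phi> \<in> Autgr q" and m: "2 \<le> m"
    and fix1: "\<phi> (bas (n,1)) = bas (n,1)" and fix2: "\<phi> (bas (n+1,m-1)) = bas (n+1,m-1)"
  shows "\<phi> (bas (n,m)) = bas (n,m)"
proof
  fix p :: "int \<times> nat"
  obtain a m' where p: "p = (a,m')" by (cases p)
  let ?u = "\<phi> (bas (n,m))"
  have u: "?u \<in> Hsp" by (rule Autc_in_Hsp[OF Autgr_in_Autc[OF \<phi>] bas_in_Hsp])
  \<comment> \<open>compare both sides of \<open>\<Delta> \<circ> \<phi> = (\<phi> \<otimes> \<phi>) \<circ> \<Delta>\<close> at \<open>x^a y \<otimes> x^(a+1) y^(m-1)\<close>\<close>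
  have "qbinom q m 1 * ?u (a,m) = Delta q ?u ((a,1),(a+1,m-1))"
    using m by (simp add: Delta_eq[OF u])
  also have "\<dots> = tmap \<phi> (Delta_basis q (n,m)) ((a,1),(a+1,m-1))"
    using AutcD(3)[OF Autgr_in_Autc[OF \<phi>] bas_in_Hsp, of "(n,m)"] by (simp add: Delta_bas)
  also have "\<dots> = qbinom q m 1 * \<phi> (bas (n,1)) (a,1) * \<phi> (bas (n+1,m-1)) (a+1,m-1)"
    by (rule tmap_Autgr_Delta_basis[OF \<phi>]) (use m in simp)
  also have "\<dots> = qbinom q m 1 * bas (n,m) (a,m)"
    unfolding fix1 fix2 using m by (simp add: bas_def)
  finally have "?u (a,m) = bas (n,m) (a,m)"
    using qbinom_1_nonzero[OF qn, of m] m by simp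
  moreover have "?u (a,m') = 0" if "m' \<noteq> m" using Autgr_bas_apply[OF \<phi>] that by simp
  ultimately show "?u p = bas (n,m) p" using p by (cases "m' = m") (auto simp: bas_def)
qed

lemma Autstar_Int_Autgr_fixes_bas:
  fixes q :: "'k::field"
  assumes qn: "\<forall>n::nat. n > 0 \<longrightarrow> q ^ n \<noteq> 1" and \<phi>: "\<phi> \<in> Autstar q" "\<phi> \<in> Autgr q"
  shows "\<phi> (bas (n,m)) = bas (n,m)"
proof -
  obtain \<beta> where "\<phi> \<in> Autc q" and \<phi>x: "\<And>n. \<phi> (bas (n,0)) = bas (n,0)"
    and \<phi>y: "\<And>n a b. \<phi> (skew_prim n a b) = skew_prim n a (a * \<beta> n + b)"
    using AutstarE[OF qn \<phi>(1)] by metis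
  have \<phi>1: "\<phi> (bas (n,1)) = bas (n,1)" for n
  proof -
    have "\<phi> (bas (n,1)) = skew_prim n 1 (\<beta> n)" using \<phi>y[of n 1 0] by simp
    moreover have "\<phi> (bas (n,1)) (n+1,0) = 0" by (rule Autgr_bas_apply[OF \<phi>(2)]) simp
    ultimately show ?thesis by (simp add: skew_prim_def bas_def)
  qed
  show ?thesis
  proof (induction m arbitrary: n rule: less_induct)
    case (less m)
    consider "m = 0" | "m = 1" | "2 \<le> m" by linarith
    then show ?case
    proof cases
      case 3
      have "\<phi> (bas (n,1)) = bas (n,1)" "\<phi> (bas (n+1,m-1)) = bas (n+1,m-1)"
        using less.IH[of 1] less.IH[of "m-1"] 3 by simp_all
      then show ?thesis by (rule Autgr_fixes_bas_step[OF qn \<phi>(2) 3])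
    next
      case 2
      show ?thesis unfolding 2 by (rule \<phi>1)
    qed (simp add: \<phi>x)
  qed
qed

lemma Autstar_Int_Autgr:
  fixes q :: "'k::field"
  assumes qn: "\<forall>n::nat. n > 0 \<longrightarrow> q ^ n \<noteq> 1"
  shows "Autstar q \<inter> Autgr q = {restrict id Hsp}"
proof
  show "Autstar q \<inter> Autgr q \<subseteq> {restrict id Hsp}"
    using Autstar_Int_Autgr_fixes_bas[OF qn]
    by (auto intro!: Autc_eq_restrict_id Autgr_in_Autc)
  have "restrict id Hsp \<in> Autgr q" by (rule AutgrI[OF restrict_id_Autc]) (simp add: Hm_in_Hsp)
  then show "{restrict id Hsp} \<subseteq> Autstar q \<inter> Autgr q" using restrict_id_Autstar by blast
qed

section \<open>Diagonal graded automorphisms\<close>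

definition alpha_prod :: "(int \<Rightarrow> 'k::field) \<Rightarrow> int \<Rightarrow> nat \<Rightarrow> 'k" where
  "alpha_prod \<alpha> n m = (\<Prod>j<m. \<alpha> (n + int j))"

lemma alpha_prod_0 [simp]: "alpha_prod \<alpha> n 0 = 1"
  by (simp add: alpha_prod_def)

lemma alpha_prod_add: "alpha_prod \<alpha> n (i + j) = alpha_prod \<alpha> n i * alpha_prod \<alpha> (n + int i) j"
  by (induction j) (auto simp: alpha_prod_def add_ac)

lemma alpha_prod_nonzero: "(\<And>n. \<alpha> n \<noteq> 0) \<Longrightarrow> alpha_prod \<alpha> n m \<noteq> 0"
  by (simp add: alpha_prod_def)

text \<open>\<open>x^n y^m \<mapsto> \<alpha>\<^sub>n \<alpha>\<^sub>n\<^sub>+\<^sub>1 \<cdots> \<alpha>\<^sub>n\<^sub>+\<^sub>m\<^sub>-\<^sub>1 x^(n+k) y^m\<close>: the graded automorphism sending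
  \<open>x^n\<close> to \<open>x^(n+k)\<close> and \<open>x^n y\<close> to \<open>\<alpha>\<^sub>n x^(n+k) y\<close>.\<close>

definition diag_shift :: "int \<Rightarrow> (int \<Rightarrow> 'k::field) \<Rightarrow> 'k hel \<Rightarrow> 'k hel" where
  "diag_shift k \<alpha> = restrict (\<lambda>h p. alpha_prod \<alpha> (fst p - k) (snd p) * h (fst p - k, snd p)) Hsp"

lemma diag_shift_apply:
  "h \<in> Hsp \<Longrightarrow> diag_shift k \<alpha> h p = alpha_prod \<alpha> (fst p - k) (snd p) * h (fst p - k, snd p)"
  by (simp add: diag_shift_def)

lemma Hsp_shift_mult:
  assumes "h \<in> Hsp"
  shows "(\<lambda>p. c p * h (fst p - d, snd p)) \<in> Hsp"
proof (rule Hsp_if_zero_outside)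
  show "finite ((\<lambda>b. (fst b + d, snd b)) ` supp h)" using Hsp_finite_supp[OF assms] by simp
  fix b assume "b \<notin> (\<lambda>b. (fst b + d, snd b)) ` supp h"
  then have "(fst b - d, snd b) \<notin> supp h" by (metis (no_types, lifting) diff_add_cancel fst_conv image_eqI snd_conv prod.collapse)
  then show "c b * h (fst b - d, snd b) = 0" by (simp add: supp_def)
qed

lemma diag_shift_in_Hsp: "h \<in> Hsp \<Longrightarrow> diag_shift k \<alpha> h \<in> Hsp"
  using Hsp_shift_mult[of h "\<lambda>p. alpha_prod \<alpha> (fst p - k) (snd p)" k] by (simp add: diag_shift_def)

lemma diag_shift_bas: "diag_shift k \<alpha> (bas (n,m)) = (\<lambda>p. alpha_prod \<alpha> n m * bas (n+k,m) p)"
  by (rule ext, simp only: diag_shift_apply[OF bas_in_Hsp]) (auto simp: bas_def)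

lemma bij_betw_diag_shift:
  assumes \<alpha>: "\<And>n. \<alpha> n \<noteq> 0"
  shows "bij_betw (diag_shift k \<alpha>) Hsp Hsp"
proof -
  have "inj_on (diag_shift k \<alpha>) Hsp"
  proof (rule inj_onI)
    fix f g :: "'a hel" assume f: "f \<in> Hsp" and g: "g \<in> Hsp" and fg: "diag_shift k \<alpha> f = diag_shift k \<alpha> g"
    show "f = g"
    proof
      fix p :: "int \<times> nat"
      have "diag_shift k \<alpha> f (fst p + k, snd p) = diag_shift k \<alpha> g (fst p + k, snd p)" using fg by simp
      then show "f p = g p" using f g alpha_prod_nonzero[OF \<alpha>] by (simp add: diag_shift_apply)
    qed
  qed
  moreover have "Hsp \<subseteq> diag_shift k \<alpha> ` Hsp"
  proof
    fix h :: "'a hel" assume h: "h \<in> Hsp"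
    define g where "g = (\<lambda>p. inverse (alpha_prod \<alpha> (fst p) (snd p)) * h (fst p - (- k), snd p))"
    have g: "g \<in> Hsp" unfolding g_def by (rule Hsp_shift_mult[OF h])
    have "diag_shift k \<alpha> g = h"
      by (rule ext, simp only: diag_shift_apply[OF g]) (simp add: g_def alpha_prod_nonzero[OF \<alpha>])
    then show "h \<in> diag_shift k \<alpha> ` Hsp" using g by blast
  qed
  ultimately show ?thesis using diag_shift_in_Hsp by (auto simp: bij_betw_def)
qed

lemma Delta_diag_shift:
  assumes h: "h \<in> Hsp"
  shows "Delta q (diag_shift k \<alpha> h) = tmap (diag_shift k \<alpha>) (Delta q h)"
proof
  fix p :: "(int \<times> nat) \<times> int \<times> nat"
  obtain a i b j where p: "p = ((a,i),(b,j))" by (metis prod.collapse)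
  have "tmap (diag_shift k \<alpha>) (Delta q h) ((a,i),(b,j))
      = (\<Sum>u\<in>supp (Delta q h). Delta q h u *
           (if u = ((a-k,i),(b-k,j)) then alpha_prod \<alpha> (a-k) i * alpha_prod \<alpha> (b-k) j else 0))"
    unfolding tmap_def
  proof (rule sum.cong[OF refl])
    fix u :: "(int \<times> nat) \<times> int \<times> nat"
    obtain c m d l where u: "u = ((c,m),(d,l))" by (metis prod.collapse)
    show "Delta q h u * diag_shift k \<alpha> (bas (fst u)) (fst ((a,i),b,j)) * diag_shift k \<alpha> (bas (snd u)) (snd ((a,i),b,j))
        = Delta q h u * (if u = ((a-k,i),(b-k,j)) then alpha_prod \<alpha> (a-k) i * alpha_prod \<alpha> (b-k) j else 0)"
      unfolding u fst_conv snd_conv diag_shift_bas by (auto simp: bas_def)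
  qed
  also have "\<dots> = Delta q h ((a-k,i),(b-k,j)) * (alpha_prod \<alpha> (a-k) i * alpha_prod \<alpha> (b-k) j)"
    by (rule sum_mult_delta[OF finite_supp_Delta[OF h] subset_refl])
  also have "\<dots> = Delta q (diag_shift k \<alpha> h) ((a,i),(b,j))"
    by (auto simp: Delta_eq[OF h] Delta_eq[OF diag_shift_in_Hsp[OF h]] diag_shift_apply[OF h]
                   alpha_prod_add algebra_simps)
  finally show "Delta q (diag_shift k \<alpha> h) p = tmap (diag_shift k \<alpha>) (Delta q h) p" using p by simp
qed

lemma eps_diag_shift:
  assumes h: "h \<in> Hsp" and \<alpha>: "\<And>n. \<alpha> n \<noteq> 0"
  shows "eps (diag_shift k \<alpha> h) = eps h"
proof -
  let ?sh = "\<lambda>c::int \<times> nat. (fst c + k, snd c)"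
  have "supp (diag_shift k \<alpha> h) \<subseteq> ?sh ` supp h"
  proof
    fix b assume "b \<in> supp (diag_shift k \<alpha> h)"
    then have "(fst b - k, snd b) \<in> supp h" using h by (auto simp: supp_def diag_shift_apply)
    then show "b \<in> ?sh ` supp h" by (auto intro: image_eqI[where x="(fst b - k, snd b)"])
  qed
  then have "eps (diag_shift k \<alpha> h) = (\<Sum>b\<in>?sh ` supp h. diag_shift k \<alpha> h b * (if snd b = 0 then 1 else 0))"
    by (rule eps_eq_sum_superset[OF finite_imageI[OF Hsp_finite_supp[OF h]]])
  also have "\<dots> = (\<Sum>c\<in>supp h. diag_shift k \<alpha> h (?sh c) * (if snd (?sh c) = 0 then 1 else 0))"
    by (rule sum.reindex[unfolded comp_def]) (auto simp: inj_on_def prod_eq_iff)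
  also have "\<dots> = eps h"
    unfolding eps_def by (rule sum.cong) (auto simp: diag_shift_apply[OF h])
  finally show ?thesis .
qed

lemma diag_shift_Autgr:
  assumes \<alpha>: "\<And>n. \<alpha> n \<noteq> 0"
  shows "diag_shift k \<alpha> \<in> Autgr q"
proof (rule AutgrI)
  show "diag_shift k \<alpha> \<in> Autc q"
  proof (rule AutcI[OF bij_betw_diag_shift[OF \<alpha>]])
    show "klinear (diag_shift k \<alpha>)"
      unfolding klinear_def by (auto simp: diag_shift_apply Hsp_add Hsp_smult fun_eq_iff algebra_simps)
    show "diag_shift k \<alpha> \<in> extensional Hsp" by (simp add: diag_shift_def)
  qed (simp_all add: Delta_diag_shift eps_diag_shift[OF _ \<alpha>])
  fix h :: "'a hel" and m assume h: "h \<in> Hm m"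
  then show "diag_shift k \<alpha> h \<in> Hm m"
    by (auto simp: Hm_iff diag_shift_in_Hsp diag_shift_apply)
qed

lemma compose_diag_shift_Autstar:
  assumes \<phi>: "\<phi> \<in> Autc q" and \<alpha>: "\<And>n. \<alpha> n \<noteq> 0" and \<phi>x: "\<And>n. \<phi> (bas (n,0)) = bas (n+k,0)"
    and \<phi>y: "\<And>n. \<phi> (bas (n,1)) = skew_prim (n+k) (\<alpha> n) (\<beta> n)"
  shows "compose Hsp \<phi> (diag_shift (-k) (\<lambda>n. inverse (\<alpha> (n - k)))) \<in> Autstar q"
proof (rule AutstarI)
  define \<delta> where "\<delta> = diag_shift (-k) (\<lambda>n. inverse (\<alpha> (n - k)))"
  have \<delta>: "\<delta> \<in> Autc q" unfolding \<delta>_def by (rule Autgr_in_Autc[OF diag_shift_Autgr]) (simp add: \<alpha>)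
  then show "compose Hsp \<phi> \<delta> \<in> Autc q" by (rule Autc_compose[OF \<phi>])
  fix n
  have "\<delta> (bas (n,0)) = bas (n - k, 0)" by (simp add: \<delta>_def diag_shift_bas fun_eq_iff)
  then show "compose Hsp \<phi> \<delta> (bas (n,0)) = bas (n,0)" by (simp add: compose_eq \<phi>x)
  have "\<delta> (bas (n,1)) = (\<lambda>p. inverse (\<alpha> (n - k)) * bas (n - k, 1) p)"
    by (simp add: \<delta>_def diag_shift_bas alpha_prod_def)
  then have "compose Hsp \<phi> \<delta> (bas (n,1)) = (\<lambda>p. inverse (\<alpha> (n - k)) * \<phi> (bas (n - k, 1)) p)"
    by (simp add: compose_eq klinear_smult[OF AutcD(2)[OF \<phi>] bas_in_Hsp])
  also have "\<phi> (bas (n - k, 1)) = skew_prim n (\<alpha> (n - k)) (\<beta> (n - k))"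
    using \<phi>y[of "n - k"] by simp
  finally show "compose Hsp \<phi> \<delta> (bas (n,1)) = skew_prim n 1 (inverse (\<alpha> (n - k)) * \<beta> (n - k))"
    using \<alpha>[of "n - k"] by (simp add: skew_prim_def fun_eq_iff algebra_simps)
qed

lemma Autc_decompose:
  fixes q :: "'k::field"
  assumes qn: "\<forall>n::nat. n > 0 \<longrightarrow> q ^ n \<noteq> 1" and \<phi>: "\<phi> \<in> Autc q"
  obtains \<psi> \<delta> where "\<psi> \<in> Autstar q" "\<delta> \<in> Autgr q" "\<phi> = \<psi> \<otimes>\<^bsub>AutcG q\<^esub> \<delta>"
proof -
  interpret G: group "AutcG q" by (rule group_AutcG)
  obtain \<alpha> k \<beta> where \<alpha>: "\<And>n. \<alpha> n \<noteq> 0" and \<phi>x: "\<And>n. \<phi> (bas (n,0)) = bas (n+k,0)"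
    and \<phi>y: "\<And>n. \<phi> (bas (n,1)) = skew_prim (n+k) (\<alpha> n) (\<beta> n)"
    using Autc_structure[OF qn \<phi>] by metis
  define \<delta> where "\<delta> = diag_shift (-k) (\<lambda>n. inverse (\<alpha> (n - k)))"
  have \<delta>: "\<delta> \<in> Autgr q" unfolding \<delta>_def by (rule diag_shift_Autgr) (simp add: \<alpha>)
  then have \<delta>c: "\<delta> \<in> carrier (AutcG q)" by (simp add: Autgr_in_Autc)
  have "\<phi> \<otimes>\<^bsub>AutcG q\<^esub> \<delta> \<in> Autstar q"
    unfolding \<delta>_def AutcG_simps by (rule compose_diag_shift_Autstar[OF \<phi> \<alpha> \<phi>x \<phi>y])
  moreover have "inv\<^bsub>AutcG q\<^esub> \<delta> \<in> Autgr q" by (rule subgroup.m_inv_closed[OF subgroup_Autgr \<delta>])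
  moreover have "\<phi> = (\<phi> \<otimes>\<^bsub>AutcG q\<^esub> \<delta>) \<otimes>\<^bsub>AutcG q\<^esub> inv\<^bsub>AutcG q\<^esub> \<delta>"
    using \<phi> \<delta>c by (simp only: AutcG_simps(1)[symmetric] G.m_assoc G.inv_closed G.r_inv G.r_one)
  ultimately show thesis by (rule that)
qed

section \<open>Internal semidirect products\<close>

definition internal_semidirect :: "('a, 'b) monoid_scheme \<Rightarrow> 'a set \<Rightarrow> 'a set \<Rightarrow> bool" where
  "internal_semidirect G N K \<longleftrightarrow>
     N \<lhd> G \<and> subgroup K G \<and> N \<inter> K = {\<one>\<^bsub>G\<^esub>} \<and> N <#>\<^bsub>G\<^esub> K = carrier G"

lemma (in group) internal_semidirect_restrict:
  assumes "internal_semidirect G N K" and H: "subgroup H G" "N \<subseteq> H"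
  shows "internal_semidirect (G\<lparr>carrier := H\<rparr>) N (K \<inter> H)"
proof -
  have N: "N \<lhd> G" and K: "subgroup K G" and NK: "N \<inter> K = {\<one>}" "N <#> K = carrier G"
    using assms(1) by (auto simp: internal_semidirect_def)
  have "H \<subseteq> N <#> (K \<inter> H)"
  proof
    fix h assume h: "h \<in> H"
    then obtain n k where n: "n \<in> N" and k: "k \<in> K" and hnk: "h = n \<otimes> k"
      using NK(2) subgroup.subset[OF H(1)] unfolding set_mult_def by blast
    have "n \<in> carrier G" "k \<in> carrier G"
      using n k N K by (auto dest: normal_imp_subgroup subgroup.mem_carrier)
    then have "k = inv n \<otimes> h" using hnk by (simp add: m_assoc[symmetric])
    then have "k \<in> H" using n h H by (simp add: subgroup.m_closed subgroup.m_inv_closed subset_iff)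
    then show "h \<in> N <#> (K \<inter> H)" using n k hnk unfolding set_mult_def by blast
  qed
  moreover have "N <#> (K \<inter> H) \<subseteq> H"
    using H unfolding set_mult_def by (auto intro: subgroup.m_closed)
  ultimately show ?thesis
    using N K NK H unfolding internal_semidirect_def set_mult_def
    by (auto intro!: normal_restrict_supergroup subgroup_incl subgroups_Inter_pair)
qed

theorem internal_semidirect_Autc:
  fixes q :: "'k::field"
  assumes qn: "\<forall>n::nat. n > 0 \<longrightarrow> q ^ n \<noteq> 1"
  shows "internal_semidirect (AutcG q) (Autstar q) (Autgr q)"
proof -
  interpret G: group "AutcG q" by (rule group_AutcG)
  have "Autstar q <#>\<^bsub>AutcG q\<^esub> Autgr q \<subseteq> carrier (AutcG q)"
    using subgroup.subset[OF subgroup_Autstar[OF qn]] subgroup.subset[OF subgroup_Autgr]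
    by (auto intro: Autc_compose simp: set_mult_def)
  moreover have "carrier (AutcG q) \<subseteq> Autstar q <#>\<^bsub>AutcG q\<^esub> Autgr q"
    using Autc_decompose[OF qn] by (auto simp: set_mult_def) metis
  ultimately show ?thesis
    unfolding internal_semidirect_def
    using normal_Autstar[OF qn] subgroup_Autgr Autstar_Int_Autgr[OF qn] by auto
qed

lemma Aut0G_eq: "Aut0G q = (AutcG q)\<lparr>carrier := Aut0 q\<rparr>"
  by (simp add: Aut0G_def AutcG_def)

lemma subgroup_Aut0: "subgroup (Aut0 q) (AutcG q)"
proof (rule group.subgroupI[OF group_AutcG])
  show "Aut0 q \<subseteq> carrier (AutcG q)" by (auto simp: Aut0_def)
  show "Aut0 q \<noteq> {}" using restrict_id_Aut0 by blast
next
  fix \<phi> \<psi> assume "\<phi> \<in> Aut0 q" "\<psi> \<in> Aut0 q"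
  then show "\<phi> \<otimes>\<^bsub>AutcG q\<^esub> \<psi> \<in> Aut0 q" by (simp add: Aut0_def Autc_compose compose_eq)
next
  fix \<phi> assume "\<phi> \<in> Aut0 q"
  then show "inv\<^bsub>AutcG q\<^esub> \<phi> \<in> Aut0 q"
    using AutcG_inv(1)[of \<phi> q] AutcG_inv(2)[of \<phi> q "bas (0,0)"] by (simp add: Aut0_def)
qed

theorem lemma3p2:
  fixes q :: "'k::field"
  assumes "q \<noteq> 0" and "\<forall>n::nat. n > 0 \<longrightarrow> q ^ n \<noteq> 1"
  shows "normal (Autstar q) (AutcG q)
       \<and> subgroup (Autgr q) (AutcG q)
       \<and> Autstar q \<inter> Autgr q = {\<one>\<^bsub>AutcG q\<^esub>}
       \<and> Autstar q <#>\<^bsub>AutcG q\<^esub> Autgr q = carrier (AutcG q)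
       \<and> normal (Autstar q) (Aut0G q)
       \<and> subgroup (Aut0gr q) (Aut0G q)
       \<and> Autstar q \<inter> Aut0gr q = {\<one>\<^bsub>Aut0G q\<^esub>}
       \<and> Autstar q <#>\<^bsub>Aut0G q\<^esub> Aut0gr q = carrier (Aut0G q)"
proof -
  have Autc: "internal_semidirect (AutcG q) (Autstar q) (Autgr q)"
    by (rule internal_semidirect_Autc[OF assms(2)])
  have "Autstar q \<subseteq> Aut0 q" by (auto simp: Autstar_def)
  then have "internal_semidirect (Aut0G q) (Autstar q) (Aut0gr q)"
    unfolding Aut0G_eq Aut0gr_def
    by (rule group.internal_semidirect_restrict[OF group_AutcG Autc subgroup_Aut0])
  with Autc show ?thesis unfolding internal_semidirect_def by blast
qed

end
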